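(* Let $\mathcal G$ be a groupoid, $x\in\mathcal G(i_0,k_0)$, $y\in\mathcal G(j_0,k_0)$ and $z\in\mathcal G(l_0,k_0)$. Then for every object $A$ of $\mathcal H^r(\mathcal G)$, $$\zeta^{y,z}_A\circ(\mathrm{id}_{z\bar y}\diamond\zeta^{x,y}_A)=\zeta^{x,z}_A\circ(m_{z\bar y,y\bar x}\diamond\mathrm{id}_{A^x}):H_{z\bar y}\diamond H_{y\bar x}\diamond A^x\to A^z .$$ In particular, for every $i\in\mathrm{Obj}\,\mathcal G$, $\zeta^{1_i,1_i}_{H_{1_i}}:H_{1_i}\diamond H_{1_i}\to H_{1_i}$ makes $H_{1_i}$ into a (left) module over the algebra $(H_{1_i},m_{1_i,1_i},\eta_i)$.
   Context: Groupoid conventions: a groupoid $\mathcal G$ is a small category in which every morphism is invertible; $\mathcal G(i,j)$ denotes the morphisms from $i$ to $j$; composition left to right ($g\in\mathcal G(i,j)$, $h\in\mathcal G(j,k)$ give $gh\in\mathcal G(i,k)$); $1_i$ identity, $\bar g$ inverse. For $x\in\mathcal G(i,k)$ the functor $(\cdot)^x:\mathcal G\to\mathcal G$: $k^x=i$, $j^x=j$ for $j\neq k$; $g^x=xg\bar x$ if $g\in\mathcal G(k,k)$, $g^x=xg$ if $g\in\mathcal G(k,l)$, $l\neq k$, $g^x=g\bar x$ if $g\in\mathcal G(j,k)$, $j\neq k$, $g^x=g$ otherwise; on objects $(H_{g_1}\diamond\dots\diamond H_{g_r})^x=H_{g_1^x}\diamond\dots\diamond H_{g_r^x}$, $\mathbf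 1^x=\mathbf 1$. Braided monoidal categories: product $\diamond$, unit $\mathbf 1$, braiding $\gamma_{A,B}$, $\bar\gamma_{A,B}:=\gamma_{B,A}^{-1}$; constraints suppressed; $\mathrm{id}_g=\mathrm{id}_{H_g}$, $\gamma_{g,h}=\gamma_{H_g,H_h}$, $\bar\gamma_{g,h}=\bar\gamma_{H_g,H_h}$. $\mathcal H^r(\mathcal G)$ is the braided monoidal category freely generated by objects $H_g$ ($g\in\mathcal G$) and morphisms $\Delta_g:H_g\to H_g\diamond H_g$, $\epsilon_g:H_g\to\mathbf 1$, $m_{g,h}:H_g\diamond H_h\to H_{gh}$, $\eta_i:\mathbf 1\to H_{1_i}$, $S_g,\bar S_g:H_g\to H_{\bar g}$, $l_i:H_{1_i}\to\mathbf 1$, $L_g:\mathbf 1\to H_g$, $v_g,v_g^{-1}:H_g\to H_g$, subject to (composable labels, $g\in\mathcal G(i,j)$): (Hopf) $\Delta$ coassociative; $(\epsilon_g\diamond\mathrm{id})\Delta_g=\mathrm{id}_g=(\mathrm{id}\diamond\epsilon_g)\Delta_g$; $m$ associative; $m_{g,1_j}(\mathrm{id}_g\diamond\eta_j)=\mathrm{id}_g=m_{1_i,g}(\eta_i\diamond\mathrm{id}_g)$; $(m_{g,h}\diamond m_{g,h})(\mathrm{id}_g\diamond\gamma_{g,h}\diamond\mathrm{id}_h)(\Delta_g\diamond\Delta_h)=\Delta_{gh}m_{g,h}$; $\epsilon_{gh}m_{g,h}=\epsilon_g\diamond\epsilon_h$; $\Delta_{1_i}\eta_i=\eta_i\diamond\eta_i$;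 $\epsilon_{1_i}\eta_i=\mathrm{id}_{\mathbf 1}$; $m_{\bar g,g}(S_g\diamond\mathrm{id}_g)\Delta_g=\eta_j\epsilon_g$; $m_{g,\bar g}(\mathrm{id}_g\diamond S_g)\Delta_g=\eta_i\epsilon_g$; $S_{\bar g}\bar S_g=\bar S_{\bar g}S_g=\mathrm{id}_g$. (Integrals) $(\mathrm{id}_{1_i}\diamond l_i)\Delta_{1_i}=\eta_il_i$; $m_{g,h}(L_g\diamond\mathrm{id}_h)=L_{gh}\epsilon_h$; $l_iL_{1_i}=\mathrm{id}_{\mathbf 1}=l_iS_{1_i}L_{1_i}$; $S_gL_g=L_{\bar g}$; $l_iS_{1_i}=l_i$. (Ribbon) $v_gv_g^{-1}=v_g^{-1}v_g=\mathrm{id}_g$; $\epsilon_gv_g=\epsilon_g$; $v_gL_g=L_g$; $S_gv_g=v_{\bar g}S_g$; $m_{g,h}(v_g\diamond\mathrm{id}_h)=v_{gh}m_{g,h}=m_{g,h}(\mathrm{id}_g\diamond v_h)$. Copairings $\sigma_{i,i}=(v_{1_i}^{-1}\diamond(v_{1_i}^{-1}S_{1_i}))\Delta_{1_i}v_{1_i}\eta_i$, $\sigma_{i,j}=\eta_i\diamond\eta_j$ ($i\neq j$). For $g\in\mathcal G(p,q)$, $h\in\mathcal G(r,s)$, $k\in\mathrm{Obj}\,\mathcal G$: $\mu_{g,h}=(m_{g,1_q}\diamond m_{1_r,h})(\mathrm{id}_g\diamond\sigma_{q,r}\diamond\mathrm{id}_h)$, $\rho^r_{g,k}=(m_{g,1_q}\diamond\mathrm{id}_{1_k})(\mathrm{id}_g\diamond\sigma_{q,k})$,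 $\rho^l_{g,k}=(\mathrm{id}_{1_k}\diamond m_{1_p,g})(\sigma_{k,p}\diamond\mathrm{id}_g)$. Required: each $\sigma_{i,j}$ is a Hopf copairing ($(\Delta_{1_i}\diamond\mathrm{id})\sigma_{i,j}=(\mathrm{id}\diamond\mathrm{id}\diamond m_{1_j,1_j})(\mathrm{id}\diamond\sigma_{i,j}\diamond\mathrm{id})\sigma_{i,j}$, $(\mathrm{id}\diamond\Delta_{1_j})\sigma_{i,j}=(m_{1_i,1_i}\diamond\mathrm{id}\diamond\mathrm{id})(\mathrm{id}\diamond\sigma_{i,j}\diamond\mathrm{id})\sigma_{i,j}$, $(\epsilon_{1_i}\diamond\mathrm{id})\sigma_{i,j}=\eta_j$, $(\mathrm{id}\diamond\epsilon_{1_j})\sigma_{i,j}=\eta_i$); $\Delta_gv_g^{-1}=\mu_{g,g}(v_g^{-1}\diamond v_g^{-1})\bar\gamma_{g,g}\Delta_g$; for $g\in\mathcal G(p,i)$, $h\in\mathcal G(j,s)$: $(m_{1_j,h}\diamond m_{g,1_i})(S_{1_j}\diamond(\mu_{h,g}\bar\gamma_{g,h}\mu_{g,h})\diamond S_{1_i})(\rho^l_{g,j}\diamond\rho^r_{h,i})=\gamma_{g,h}$. The morphisms $\zeta$: for $x\in\mathcal G(i_0,k_0)$, $y\in\mathcal G(j_0,k_0)$ and $g\in\mathcal G(i,j)$, $\zeta^{x,y}_g:H_{y\bar x}\diamond H_{g^x}\to H_{g^y}$ is: $\epsilon_{y\bar x}\diamond\mathrm{id}_{g^x}$ if $i\neq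 k_0\neq j$; $m_{y\bar x,g^x}$ if $i=k_0\neq j$; $m_{g^x,x\bar y}(\mathrm{id}_{g^x}\diamond S_{y\bar x})\gamma_{y\bar x,g^x}$ if $i\neq k_0=j$; $m_{y\bar x,g^xx\bar y}(\mathrm{id}_{y\bar x}\diamond m_{g^x,x\bar y})(\mathrm{id}_{y\bar x}\diamond((\mathrm{id}_{g^x}\diamond S_{y\bar x})\gamma_{y\bar x,g^x}))(\Delta_{y\bar x}\diamond\mathrm{id}_{g^x})$ if $i=k_0=j$. Extended to all objects by $\zeta^{x,y}_{\mathbf 1}=\epsilon_{y\bar x}$ and $\zeta^{x,y}_{A\diamond H_g}=(\zeta^{x,y}_A\diamond\zeta^{x,y}_g)(\mathrm{id}_{y\bar x}\diamond\gamma_{y\bar x,A^x}\diamond\mathrm{id}_{g^x})(\Delta_{y\bar x}\diamond\mathrm{id}_{A^x\diamond H_{g^x}})$, giving $\zeta^{x,y}_A:H_{y\bar x}\diamond A^x\to A^y$. *)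

theory Defs
  imports Main
begin

text \<open>A (small) groupoid: objects, morphisms, source, target, composition written
left to right (g in G(i,j), h in G(j,k) give gcmp g h in G(i,k)), identities, inverses.\<close>

record ('o, 'a) grpd =
  gOb  :: "'o set"
  gAr  :: "'a set"
  gsrc :: "'a \<Rightarrow> 'o"
  gtgt :: "'a \<Rightarrow> 'o"
  gcmp :: "'a \<Rightarrow> 'a \<Rightarrow> 'a"
  gid  :: "'o \<Rightarrow> 'a"
  ginv :: "'a \<Rightarrow> 'a"

definition groupoid :: "('o, 'a) grpd \<Rightarrow> bool" where
  "groupoid G \<longleftrightarrow>
     (\<forall>f\<in>gAr G. gsrc G f \<in> gOb G \<and> gtgt G f \<in> gOb G) \<and>
     (\<forall>f\<in>gAr G. \<forall>g\<in>gAr G. gtgt G f = gsrc G g \<longrightarrow>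
        gcmp G f g \<in> gAr G \<and> gsrc G (gcmp G f g) = gsrc G f \<and> gtgt G (gcmp G f g) = gtgt G g) \<and>
     (\<forall>f\<in>gAr G. \<forall>g\<in>gAr G. \<forall>h\<in>gAr G. gtgt G f = gsrc G g \<longrightarrow> gtgt G g = gsrc G h \<longrightarrow>
        gcmp G (gcmp G f g) h = gcmp G f (gcmp G g h)) \<and>
     (\<forall>i\<in>gOb G. gid G i \<in> gAr G \<and> gsrc G (gid G i) = i \<and> gtgt G (gid G i) = i) \<and>
     (\<forall>f\<in>gAr G. gcmp G (gid G (gsrc G f)) f = f \<and> gcmp G f (gid G (gtgt G f)) = f) \<and>
     (\<forall>f\<in>gAr G. ginv G f \<in> gAr G \<and> gsrc G (ginv G f) = gtgt G f \<and> gtgt G (ginv G f) = gsrc G f \<and>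
        gcmp G f (ginv G f) = gid G (gsrc G f) \<and> gcmp G (ginv G f) f = gid G (gtgt G f))"

text \<open>Objects of H^r(G) are words H_{g1} \<diamond> ... \<diamond> H_{gr}, represented as lists of
morphisms of G (the empty list is the unit object 1); associativity and unit constraints
are suppressed (strict model, justified by coherence).  Morphism terms:
Comp f g is f \<circ> g (g first), Tens is \<diamond>, Br w v = gamma_{w,v} : w@v \<rightarrow> v@w,
BrI w v = its inverse : v@w \<rightarrow> w@v; the remaining constructors are the generators
Delta, epsilon, m, eta, S, Sbar, l, L, v, v^{-1}.\<close>

datatype ('o, 'a) hm =
    Id "'a list"
  | Comp "('o, 'a) hm" "('o, 'a) hm"
  | Tens "('o, 'a) hm" "('o, 'a) hm"
  | Br "'a list" "'a list"
  | BrI "'a list" "'a list"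
  | Dl 'a
  | Ep 'a
  | Mu 'a 'a
  | Et 'o
  | An 'a
  | AnB 'a
  | Li 'o
  | Lc 'a
  | Rv 'a
  | RvI 'a

fun hdom :: "('o, 'a) grpd \<Rightarrow> ('o, 'a) hm \<Rightarrow> 'a list"
and hcod :: "('o, 'a) grpd \<Rightarrow> ('o, 'a) hm \<Rightarrow> 'a list" where
  "hdom G (Id w) = w"
| "hdom G (Comp f g) = hdom G g"
| "hdom G (Tens f g) = hdom G f @ hdom G g"
| "hdom G (Br w v) = w @ v"
| "hdom G (BrI w v) = v @ w"
| "hdom G (Dl g) = [g]"
| "hdom G (Ep g) = [g]"
| "hdom G (Mu g h) = [g, h]"
| "hdom G (Et i) = []"
| "hdom G (An g) = [g]"
| "hdom G (AnB g) = [g]"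
| "hdom G (Li i) = [gid G i]"
| "hdom G (Lc g) = []"
| "hdom G (Rv g) = [g]"
| "hdom G (RvI g) = [g]"
| "hcod G (Id w) = w"
| "hcod G (Comp f g) = hcod G f"
| "hcod G (Tens f g) = hcod G f @ hcod G g"
| "hcod G (Br w v) = v @ w"
| "hcod G (BrI w v) = w @ v"
| "hcod G (Dl g) = [g, g]"
| "hcod G (Ep g) = []"
| "hcod G (Mu g h) = [gcmp G g h]"
| "hcod G (Et i) = [gid G i]"
| "hcod G (An g) = [ginv G g]"
| "hcod G (AnB g) = [ginv G g]"
| "hcod G (Li i) = []"
| "hcod G (Lc g) = [g]"
| "hcod G (Rv g) = [g]"
| "hcod G (RvI g) = [g]"

fun hwf :: "('o, 'a) grpd \<Rightarrow> ('o, 'a) hm \<Rightarrow> bool" where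
  "hwf G (Id w) = (set w \<subseteq> gAr G)"
| "hwf G (Comp f g) = (hwf G f \<and> hwf G g \<and> hdom G f = hcod G g)"
| "hwf G (Tens f g) = (hwf G f \<and> hwf G g)"
| "hwf G (Br w v) = (set w \<subseteq> gAr G \<and> set v \<subseteq> gAr G)"
| "hwf G (BrI w v) = (set w \<subseteq> gAr G \<and> set v \<subseteq> gAr G)"
| "hwf G (Dl g) = (g \<in> gAr G)"
| "hwf G (Ep g) = (g \<in> gAr G)"
| "hwf G (Mu g h) = (g \<in> gAr G \<and> h \<in> gAr G \<and> gtgt G g = gsrc G h)"
| "hwf G (Et i) = (i \<in> gOb G)"
| "hwf G (An g) = (g \<in> gAr G)"
| "hwf G (AnB g) = (g \<in> gAr G)"
| "hwf G (Li i) = (i \<in> gOb G)"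
| "hwf G (Lc g) = (g \<in> gAr G)"
| "hwf G (Rv g) = (g \<in> gAr G)"
| "hwf G (RvI g) = (g \<in> gAr G)"

definition sigma :: "('o, 'a) grpd \<Rightarrow> 'o \<Rightarrow> 'o \<Rightarrow> ('o, 'a) hm" where
  "sigma G i j = (if i = j then
      Comp (Tens (RvI (gid G i)) (Comp (RvI (gid G i)) (An (gid G i))))
           (Comp (Dl (gid G i)) (Comp (Rv (gid G i)) (Et i)))
    else Tens (Et i) (Et j))"

definition hmu :: "('o, 'a) grpd \<Rightarrow> 'a \<Rightarrow> 'a \<Rightarrow> ('o, 'a) hm" where
  "hmu G g h = Comp (Tens (Mu g (gid G (gtgt G g))) (Mu (gid G (gsrc G h)) h))
                    (Tens (Tens (Id [g]) (sigma G (gtgt G g) (gsrc G h))) (Id [h]))"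

definition rhor :: "('o, 'a) grpd \<Rightarrow> 'a \<Rightarrow> 'o \<Rightarrow> ('o, 'a) hm" where
  "rhor G g k = Comp (Tens (Mu g (gid G (gtgt G g))) (Id [gid G k]))
                     (Tens (Id [g]) (sigma G (gtgt G g) k))"

definition rhol :: "('o, 'a) grpd \<Rightarrow> 'a \<Rightarrow> 'o \<Rightarrow> ('o, 'a) hm" where
  "rhol G g k = Comp (Tens (Id [gid G k]) (Mu (gid G (gsrc G g)) g))
                     (Tens (sigma G k (gsrc G g)) (Id [g]))"

inductive heq :: "('o, 'a) grpd \<Rightarrow> ('o, 'a) hm \<Rightarrow> ('o, 'a) hm \<Rightarrow> bool" for G where
  refl: "hwf G f \<Longrightarrow> heq G f f"
| sym: "heq G f g \<Longrightarrow> heq G g f"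
| trans: "heq G f g \<Longrightarrow> heq G g h \<Longrightarrow> heq G f h"
| comp_cong: "heq G f f' \<Longrightarrow> heq G g g' \<Longrightarrow> hdom G f = hcod G g \<Longrightarrow> heq G (Comp f g) (Comp f' g')"
| tens_cong: "heq G f f' \<Longrightarrow> heq G g g' \<Longrightarrow> heq G (Tens f g) (Tens f' g')"
| comp_assoc: "hwf G f \<Longrightarrow> hwf G g \<Longrightarrow> hwf G h \<Longrightarrow> hdom G f = hcod G g \<Longrightarrow> hdom G g = hcod G h \<Longrightarrow>
     heq G (Comp (Comp f g) h) (Comp f (Comp g h))"
| comp_idl: "hwf G f \<Longrightarrow> heq G (Comp (Id (hcod G f)) f) f"
| comp_idr: "hwf G f \<Longrightarrow> heq G (Comp f (Id (hdom G f))) f"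
| tens_assoc: "hwf G f \<Longrightarrow> hwf G g \<Longrightarrow> hwf G h \<Longrightarrow> heq G (Tens (Tens f g) h) (Tens f (Tens g h))"
| tens_unitl: "hwf G f \<Longrightarrow> heq G (Tens (Id []) f) f"
| tens_unitr: "hwf G f \<Longrightarrow> heq G (Tens f (Id [])) f"
| tens_id: "set w \<subseteq> gAr G \<Longrightarrow> set v \<subseteq> gAr G \<Longrightarrow> heq G (Tens (Id w) (Id v)) (Id (w @ v))"
| interchange: "hwf G f \<Longrightarrow> hwf G f' \<Longrightarrow> hwf G g \<Longrightarrow> hwf G g' \<Longrightarrow>
     hdom G f = hcod G f' \<Longrightarrow> hdom G g = hcod G g' \<Longrightarrow>
     heq G (Tens (Comp f f') (Comp g g')) (Comp (Tens f g) (Tens f' g'))"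
| br_inv1: "set w \<subseteq> gAr G \<Longrightarrow> set v \<subseteq> gAr G \<Longrightarrow> heq G (Comp (Br w v) (BrI w v)) (Id (v @ w))"
| br_inv2: "set w \<subseteq> gAr G \<Longrightarrow> set v \<subseteq> gAr G \<Longrightarrow> heq G (Comp (BrI w v) (Br w v)) (Id (w @ v))"
| br_nat: "hwf G f \<Longrightarrow> hwf G g \<Longrightarrow>
     heq G (Comp (Br (hcod G f) (hcod G g)) (Tens f g)) (Comp (Tens g f) (Br (hdom G f) (hdom G g)))"
| hex1: "set w \<subseteq> gAr G \<Longrightarrow> set u \<subseteq> gAr G \<Longrightarrow> set v \<subseteq> gAr G \<Longrightarrow>
     heq G (Br w (u @ v)) (Comp (Tens (Id u) (Br w v)) (Tens (Br w u) (Id v)))"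
| hex2: "set w \<subseteq> gAr G \<Longrightarrow> set u \<subseteq> gAr G \<Longrightarrow> set v \<subseteq> gAr G \<Longrightarrow>
     heq G (Br (w @ u) v) (Comp (Tens (Br w v) (Id u)) (Tens (Id w) (Br u v)))"
| coassoc: "g \<in> gAr G \<Longrightarrow>
     heq G (Comp (Tens (Dl g) (Id [g])) (Dl g)) (Comp (Tens (Id [g]) (Dl g)) (Dl g))"
| counitl: "g \<in> gAr G \<Longrightarrow> heq G (Comp (Tens (Ep g) (Id [g])) (Dl g)) (Id [g])"
| counitr: "g \<in> gAr G \<Longrightarrow> heq G (Comp (Tens (Id [g]) (Ep g)) (Dl g)) (Id [g])"
| massoc: "g \<in> gAr G \<Longrightarrow> h \<in> gAr G \<Longrightarrow> k \<in> gAr G \<Longrightarrow> gtgt G g = gsrc G h \<Longrightarrow> gtgt G h = gsrc G k \<Longrightarrow>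
     heq G (Comp (Mu (gcmp G g h) k) (Tens (Mu g h) (Id [k])))
           (Comp (Mu g (gcmp G h k)) (Tens (Id [g]) (Mu h k)))"
| unitr: "g \<in> gAr G \<Longrightarrow> heq G (Comp (Mu g (gid G (gtgt G g))) (Tens (Id [g]) (Et (gtgt G g)))) (Id [g])"
| unitl: "g \<in> gAr G \<Longrightarrow> heq G (Comp (Mu (gid G (gsrc G g)) g) (Tens (Et (gsrc G g)) (Id [g]))) (Id [g])"
| bialg: "g \<in> gAr G \<Longrightarrow> h \<in> gAr G \<Longrightarrow> gtgt G g = gsrc G h \<Longrightarrow>
     heq G (Comp (Tens (Mu g h) (Mu g h))
                 (Comp (Tens (Tens (Id [g]) (Br [g] [h])) (Id [h])) (Tens (Dl g) (Dl h))))
           (Comp (Dl (gcmp G g h)) (Mu g h))"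
| counit_mult: "g \<in> gAr G \<Longrightarrow> h \<in> gAr G \<Longrightarrow> gtgt G g = gsrc G h \<Longrightarrow>
     heq G (Comp (Ep (gcmp G g h)) (Mu g h)) (Tens (Ep g) (Ep h))"
| delta_unit: "i \<in> gOb G \<Longrightarrow> heq G (Comp (Dl (gid G i)) (Et i)) (Tens (Et i) (Et i))"
| counit_unit: "i \<in> gOb G \<Longrightarrow> heq G (Comp (Ep (gid G i)) (Et i)) (Id [])"
| antipodel: "g \<in> gAr G \<Longrightarrow>
     heq G (Comp (Mu (ginv G g) g) (Comp (Tens (An g) (Id [g])) (Dl g))) (Comp (Et (gtgt G g)) (Ep g))"
| antipoder: "g \<in> gAr G \<Longrightarrow>
     heq G (Comp (Mu g (ginv G g)) (Comp (Tens (Id [g]) (An g)) (Dl g))) (Comp (Et (gsrc G g)) (Ep g))"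
| antipode_inv1: "g \<in> gAr G \<Longrightarrow> heq G (Comp (An (ginv G g)) (AnB g)) (Id [g])"
| antipode_inv2: "g \<in> gAr G \<Longrightarrow> heq G (Comp (AnB (ginv G g)) (An g)) (Id [g])"
| int_right: "i \<in> gOb G \<Longrightarrow>
     heq G (Comp (Tens (Id [gid G i]) (Li i)) (Dl (gid G i))) (Comp (Et i) (Li i))"
| coint_left: "g \<in> gAr G \<Longrightarrow> h \<in> gAr G \<Longrightarrow> gtgt G g = gsrc G h \<Longrightarrow>
     heq G (Comp (Mu g h) (Tens (Lc g) (Id [h]))) (Comp (Lc (gcmp G g h)) (Ep h))"
| int_norm1: "i \<in> gOb G \<Longrightarrow> heq G (Comp (Li i) (Lc (gid G i))) (Id [])"
| int_norm2: "i \<in> gOb G \<Longrightarrow> heq G (Comp (Li i) (Comp (An (gid G i)) (Lc (gid G i)))) (Id [])"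
| coint_S: "g \<in> gAr G \<Longrightarrow> heq G (Comp (An g) (Lc g)) (Lc (ginv G g))"
| int_S: "i \<in> gOb G \<Longrightarrow> heq G (Comp (Li i) (An (gid G i))) (Li i)"
| v_inv1: "g \<in> gAr G \<Longrightarrow> heq G (Comp (Rv g) (RvI g)) (Id [g])"
| v_inv2: "g \<in> gAr G \<Longrightarrow> heq G (Comp (RvI g) (Rv g)) (Id [g])"
| v_counit: "g \<in> gAr G \<Longrightarrow> heq G (Comp (Ep g) (Rv g)) (Ep g)"
| v_coint: "g \<in> gAr G \<Longrightarrow> heq G (Comp (Rv g) (Lc g)) (Lc g)"
| v_S: "g \<in> gAr G \<Longrightarrow> heq G (Comp (An g) (Rv g)) (Comp (Rv (ginv G g)) (An g))"
| v_mult1: "g \<in> gAr G \<Longrightarrow> h \<in> gAr G \<Longrightarrow> gtgt G g = gsrc G h \<Longrightarrow>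
     heq G (Comp (Mu g h) (Tens (Rv g) (Id [h]))) (Comp (Rv (gcmp G g h)) (Mu g h))"
| v_mult2: "g \<in> gAr G \<Longrightarrow> h \<in> gAr G \<Longrightarrow> gtgt G g = gsrc G h \<Longrightarrow>
     heq G (Comp (Rv (gcmp G g h)) (Mu g h)) (Comp (Mu g h) (Tens (Id [g]) (Rv h)))"
| copair1: "i \<in> gOb G \<Longrightarrow> j \<in> gOb G \<Longrightarrow>
     heq G (Comp (Tens (Dl (gid G i)) (Id [gid G j])) (sigma G i j))
           (Comp (Tens (Id [gid G i, gid G i]) (Mu (gid G j) (gid G j)))
                 (Comp (Tens (Tens (Id [gid G i]) (sigma G i j)) (Id [gid G j])) (sigma G i j)))"
| copair2: "i \<in> gOb G \<Longrightarrow> j \<in> gOb G \<Longrightarrow>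
     heq G (Comp (Tens (Id [gid G i]) (Dl (gid G j))) (sigma G i j))
           (Comp (Tens (Mu (gid G i) (gid G i)) (Id [gid G j, gid G j]))
                 (Comp (Tens (Tens (Id [gid G i]) (sigma G i j)) (Id [gid G j])) (sigma G i j)))"
| copair3: "i \<in> gOb G \<Longrightarrow> j \<in> gOb G \<Longrightarrow>
     heq G (Comp (Tens (Ep (gid G i)) (Id [gid G j])) (sigma G i j)) (Et j)"
| copair4: "i \<in> gOb G \<Longrightarrow> j \<in> gOb G \<Longrightarrow>
     heq G (Comp (Tens (Id [gid G i]) (Ep (gid G j))) (sigma G i j)) (Et i)"
| delta_vinv: "g \<in> gAr G \<Longrightarrow>
     heq G (Comp (Dl g) (RvI g))
           (Comp (hmu G g g) (Comp (Tens (RvI g) (RvI g)) (Comp (BrI [g] [g]) (Dl g))))"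
| braid_rel: "g \<in> gAr G \<Longrightarrow> h \<in> gAr G \<Longrightarrow>
     heq G (Comp (Tens (Mu (gid G (gsrc G h)) h) (Mu g (gid G (gtgt G g))))
                 (Comp (Tens (Tens (An (gid G (gsrc G h)))
                                   (Comp (hmu G h g) (Comp (BrI [h] [g]) (hmu G g h))))
                             (An (gid G (gtgt G g))))
                       (Tens (rhol G g (gsrc G h)) (rhor G h (gtgt G g)))))
           (Br [g] [h])"

definition gconj :: "('o, 'a) grpd \<Rightarrow> 'a \<Rightarrow> 'a \<Rightarrow> 'a" where
  "gconj G x g = (let k = gtgt G x in
     if gsrc G g = k \<and> gtgt G g = k then gcmp G (gcmp G x g) (ginv G x)
     else if gsrc G g = k then gcmp G x g
     else if gtgt G g = k then gcmp G g (ginv G x)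
     else g)"

definition wconj :: "('o, 'a) grpd \<Rightarrow> 'a \<Rightarrow> 'a list \<Rightarrow> 'a list" where
  "wconj G x A = map (gconj G x) A"

text \<open>zeta^{x,y}_g : H_{y xbar} \<diamond> H_{g^x} \<rightarrow> H_{g^y}, for x in G(i0,k0), y in G(j0,k0).\<close>
definition zeta1 :: "('o, 'a) grpd \<Rightarrow> 'a \<Rightarrow> 'a \<Rightarrow> 'a \<Rightarrow> ('o, 'a) hm" where
  "zeta1 G x y g = (let k0 = gtgt G x; u = gcmp G y (ginv G x); gx = gconj G x g;
                       w = gcmp G x (ginv G y) in
     if gsrc G g \<noteq> k0 \<and> gtgt G g \<noteq> k0 then Tens (Ep u) (Id [gx])
     else if gsrc G g = k0 \<and> gtgt G g \<noteq> k0 then Mu u gx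
     else if gsrc G g \<noteq> k0 \<and> gtgt G g = k0 then
       Comp (Mu gx w) (Comp (Tens (Id [gx]) (An u)) (Br [u] [gx]))
     else
       Comp (Mu u (gcmp G gx w))
        (Comp (Tens (Id [u]) (Mu gx w))
         (Comp (Tens (Id [u]) (Comp (Tens (Id [gx]) (An u)) (Br [u] [gx])))
               (Tens (Dl u) (Id [gx])))))"

text \<open>Extension to all objects; the argument is the reversed word, so that
g # ra stands for A \<diamond> H_g with A = rev ra.\<close>
fun zetaR :: "('o, 'a) grpd \<Rightarrow> 'a \<Rightarrow> 'a \<Rightarrow> 'a list \<Rightarrow> ('o, 'a) hm" where
  "zetaR G x y [] = Ep (gcmp G y (ginv G x))"
| "zetaR G x y [g] = zeta1 G x y g"
| "zetaR G x y (g # h # ra) =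
     (let u = gcmp G y (ginv G x); Ax = wconj G x (rev (h # ra)) in
      Comp (Tens (zetaR G x y (h # ra)) (zeta1 G x y g))
       (Comp (Tens (Tens (Id [u]) (Br [u] Ax)) (Id [gconj G x g]))
             (Tens (Dl u) (Id (Ax @ [gconj G x g])))))"

definition zeta :: "('o, 'a) grpd \<Rightarrow> 'a \<Rightarrow> 'a \<Rightarrow> 'a list \<Rightarrow> ('o, 'a) hm" where
  "zeta G x y A = zetaR G x y (rev A)"

end

theory Submission
  imports Defs
begin

text \<open>
  We compute in the quotient of well-formed terms by the defining congruence, where composition
  and tensor product are total operations on classes, so that the strict braided monoidal
  structure becomes equational rewriting.

  On a word \<open>A \<diamond> H\<^sub>g\<close>, and on a loop \<open>g\<close> at \<open>k\<^sub>0\<close>, \<open>\<zeta>\<close> has the shape \<open>P (id \<diamond> Q) (\<Delta> \<diamond> id)\<close>.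
  A composite of two such morphisms is again of this shape once the parts \<open>P\<close> and \<open>Q\<close> are
  multiplicative and \<open>Q\<close> of the outer factor can be moved past \<open>P\<close> of the inner one: the two
  coproducts then merge by the bialgebra axiom.  This yields the module identity by induction on
  the word.  For a single generator the four cases of \<open>\<zeta>\<close> reduce to multiplicativity of
  \<open>\<epsilon>\<close>, associativity of \<open>m\<close>, and the fact that \<open>u \<otimes> h \<mapsto> h S(u)\<close>, taken through the braiding,
  is a right action.  The latter holds because the antipode is a braided anti-homomorphism,
  \<open>S m = m (S \<diamond> S) \<gamma>\<close>, which is proved by the convolution-inverse argument in
  \<open>Hom(H\<^sub>a \<diamond> H\<^sub>b, -)\<close>.  The unit law reduces to \<open>S \<eta> = \<eta>\<close> and the unit axioms.
\<close>

locale Hr =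
  fixes G :: "('o, 'a) grpd"
  assumes groupoid_G: "groupoid G"
begin

lemma gsrc_closed [simp]: "f \<in> gAr G \<Longrightarrow> gsrc G f \<in> gOb G"
  and gtgt_closed [simp]: "f \<in> gAr G \<Longrightarrow> gtgt G f \<in> gOb G"
  and gcmp_closed [simp]: "f \<in> gAr G \<Longrightarrow> g \<in> gAr G \<Longrightarrow> gtgt G f = gsrc G g \<Longrightarrow> gcmp G f g \<in> gAr G"
  and gsrc_gcmp [simp]: "f \<in> gAr G \<Longrightarrow> g \<in> gAr G \<Longrightarrow> gtgt G f = gsrc G g \<Longrightarrow> gsrc G (gcmp G f g) = gsrc G f"
  and gtgt_gcmp [simp]: "f \<in> gAr G \<Longrightarrow> g \<in> gAr G \<Longrightarrow> gtgt G f = gsrc G g \<Longrightarrow> gtgt G (gcmp G f g) = gtgt G g"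
  and gcmp_assoc [simp]: "f \<in> gAr G \<Longrightarrow> g \<in> gAr G \<Longrightarrow> h \<in> gAr G \<Longrightarrow> gtgt G f = gsrc G g \<Longrightarrow>
         gtgt G g = gsrc G h \<Longrightarrow> gcmp G (gcmp G f g) h = gcmp G f (gcmp G g h)"
  and gid_closed [simp]: "i \<in> gOb G \<Longrightarrow> gid G i \<in> gAr G"
  and gsrc_gid [simp]: "i \<in> gOb G \<Longrightarrow> gsrc G (gid G i) = i"
  and gtgt_gid [simp]: "i \<in> gOb G \<Longrightarrow> gtgt G (gid G i) = i"
  and gcmp_gid_src: "f \<in> gAr G \<Longrightarrow> gcmp G (gid G (gsrc G f)) f = f"
  and gcmp_gid_tgt: "f \<in> gAr G \<Longrightarrow> gcmp G f (gid G (gtgt G f)) = f"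
  and ginv_closed [simp]: "f \<in> gAr G \<Longrightarrow> ginv G f \<in> gAr G"
  and gsrc_ginv [simp]: "f \<in> gAr G \<Longrightarrow> gsrc G (ginv G f) = gtgt G f"
  and gtgt_ginv [simp]: "f \<in> gAr G \<Longrightarrow> gtgt G (ginv G f) = gsrc G f"
  and gcmp_ginv_right [simp]: "f \<in> gAr G \<Longrightarrow> gcmp G f (ginv G f) = gid G (gsrc G f)"
  and gcmp_ginv_left [simp]: "f \<in> gAr G \<Longrightarrow> gcmp G (ginv G f) f = gid G (gtgt G f)"
  using groupoid_G unfolding groupoid_def by blast+

lemma gcmp_gid_left [simp]: "f \<in> gAr G \<Longrightarrow> gsrc G f = i \<Longrightarrow> gcmp G (gid G i) f = f"
  and gcmp_gid_right [simp]: "f \<in> gAr G \<Longrightarrow> gtgt G f = i \<Longrightarrow> gcmp G f (gid G i) = f"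
  using gcmp_gid_src gcmp_gid_tgt by auto

lemma gcmp_ginv_cancel [simp]:
  "f \<in> gAr G \<Longrightarrow> g \<in> gAr G \<Longrightarrow> gsrc G g = gsrc G f \<Longrightarrow> gcmp G f (gcmp G (ginv G f) g) = g"
  and ginv_gcmp_cancel [simp]:
  "f \<in> gAr G \<Longrightarrow> g \<in> gAr G \<Longrightarrow> gsrc G g = gtgt G f \<Longrightarrow> gcmp G (ginv G f) (gcmp G f g) = g"
  by (subst gcmp_assoc[symmetric]; simp)+

lemma ginv_unique:
  assumes "f \<in> gAr G" "g \<in> gAr G" "gtgt G f = gsrc G g" "gcmp G f g = gid G (gsrc G f)"
  shows "g = ginv G f"
  using ginv_gcmp_cancel[of f g] assms by simp

lemma ginv_ginv [simp]: "f \<in> gAr G \<Longrightarrow> ginv G (ginv G f) = f"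
  by (metis ginv_closed ginv_unique gcmp_ginv_left gsrc_ginv gtgt_ginv)

lemma ginv_gid [simp]: "i \<in> gOb G \<Longrightarrow> ginv G (gid G i) = gid G i"
  by (metis gid_closed gcmp_gid_left ginv_unique gsrc_gid gtgt_gid)

lemma ginv_gcmp [simp]:
  "f \<in> gAr G \<Longrightarrow> g \<in> gAr G \<Longrightarrow> gtgt G f = gsrc G g \<Longrightarrow>
   ginv G (gcmp G f g) = gcmp G (ginv G g) (ginv G f)"
  by (rule ginv_unique[symmetric]) auto

lemma hwf_objects: "hwf G f \<Longrightarrow> set (hdom G f) \<subseteq> gAr G \<and> set (hcod G f) \<subseteq> gAr G"
  by (induction f) auto

lemma heq_hwf: "heq G f g \<Longrightarrow> hwf G f \<and> hwf G g \<and> hdom G f = hdom G g \<and> hcod G f = hcod G g"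
  by (induction rule: heq.induct)
    (auto simp: sigma_def hmu_def rhol_def rhor_def dest: hwf_objects)

subsection \<open>The quotient category\<close>

text \<open>Composition and tensor
  product of classes are total: an ill-typed composite, or one with an argument that is not a
  class, is the junk value \<open>{}\<close>, which is also the class of every ill-formed term.\<close>

definition cls :: "('o, 'a) hm \<Rightarrow> ('o, 'a) hm set" where
  "cls f = {g. heq G f g}"

definition mor :: "('o, 'a) hm set \<Rightarrow> bool" where
  "mor C \<longleftrightarrow> (\<exists>f. hwf G f \<and> C = cls f)"

definition mor_or_empty :: "('o, 'a) hm set \<Rightarrow> bool" where
  "mor_or_empty C \<longleftrightarrow> mor C \<or> C = {}"

definition rep :: "('o, 'a) hm set \<Rightarrow> ('o, 'a) hm" where
  "rep C = (SOME f. f \<in> C)"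

definition cdom :: "('o, 'a) hm set \<Rightarrow> 'a list" where
  "cdom C = hdom G (rep C)"

definition ccod :: "('o, 'a) hm set \<Rightarrow> 'a list" where
  "ccod C = hcod G (rep C)"

definition ccomp :: "('o, 'a) hm set \<Rightarrow> ('o, 'a) hm set \<Rightarrow> ('o, 'a) hm set" (infixr "\<odot>" 55) where
  "C \<odot> D = (if mor C \<and> mor D \<and> cdom C = ccod D then cls (Comp (rep C) (rep D)) else {})"

definition ctens :: "('o, 'a) hm set \<Rightarrow> ('o, 'a) hm set \<Rightarrow> ('o, 'a) hm set" (infixr "\<otimes>" 65) where
  "C \<otimes> D = (if mor C \<and> mor D then cls (Tens (rep C) (rep D)) else {})"

lemma cls_eqI: "heq G f g \<Longrightarrow> cls f = cls g"
  unfolding cls_def by (auto intro: heq.trans heq.sym)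

lemma heq_if_cls_eq: "hwf G f \<Longrightarrow> cls f = cls g \<Longrightarrow> heq G f g"
  unfolding cls_def by (auto intro: heq.refl heq.sym)

lemma cls_ill_formed: "\<not> hwf G f \<Longrightarrow> cls f = {}"
  unfolding cls_def using heq_hwf by blast

lemma mor_cls [simp]: "mor (cls f) \<longleftrightarrow> hwf G f"
  unfolding mor_def cls_def by (metis cls_def cls_ill_formed empty_iff heq.refl mem_Collect_eq)

lemma not_mor_empty [simp]: "\<not> mor {}"
  unfolding mor_def cls_def by (auto intro: heq.refl)

lemma mor_or_emptyI [simp]: "mor C \<Longrightarrow> mor_or_empty C"
  by (simp add: mor_or_empty_def)

lemma heq_rep_cls: "hwf G f \<Longrightarrow> heq G f (rep (cls f))"
  unfolding rep_def cls_def mem_Collect_eq by (rule someI, erule heq.refl)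

lemma mor_rep: "mor C \<Longrightarrow> hwf G (rep C) \<and> C = cls (rep C)"
  unfolding mor_def using heq_rep_cls heq_hwf cls_eqI by metis

lemma cdom_cls [simp]: "hwf G f \<Longrightarrow> cdom (cls f) = hdom G f"
  and ccod_cls [simp]: "hwf G f \<Longrightarrow> ccod (cls f) = hcod G f"
  unfolding cdom_def ccod_def using heq_rep_cls heq_hwf by metis+

lemma cls_Comp: "cls (Comp f g) = cls f \<odot> cls g"
proof (cases "hwf G f \<and> hwf G g \<and> hdom G f = hcod G g")
  case True
  then have "heq G (Comp f g) (Comp (rep (cls f)) (rep (cls g)))"
    by (intro heq.comp_cong heq_rep_cls) auto
  then show ?thesis using True unfolding ccomp_def by (simp add: cls_eqI)
qed (auto simp: ccomp_def cls_ill_formed)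

lemma cls_Tens: "cls (Tens f g) = cls f \<otimes> cls g"
proof (cases "hwf G f \<and> hwf G g")
  case True
  then have "heq G (Tens f g) (Tens (rep (cls f)) (rep (cls g)))"
    by (intro heq.tens_cong heq_rep_cls) auto
  then show ?thesis using True unfolding ctens_def by (simp add: cls_eqI)
qed (auto simp: ctens_def cls_ill_formed)

lemma mor_ccomp [simp]: "mor (C \<odot> D) \<longleftrightarrow> mor C \<and> mor D \<and> cdom C = ccod D"
  and mor_ctens [simp]: "mor (C \<otimes> D) \<longleftrightarrow> mor C \<and> mor D"
  unfolding ccomp_def ctens_def using mor_rep by (auto simp: cdom_def ccod_def)

lemma cdom_ccomp [simp]: "mor C \<Longrightarrow> mor D \<Longrightarrow> cdom C = ccod D \<Longrightarrow> cdom (C \<odot> D) = cdom D"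
  and ccod_ccomp [simp]: "mor C \<Longrightarrow> mor D \<Longrightarrow> cdom C = ccod D \<Longrightarrow> ccod (C \<odot> D) = ccod C"
  and cdom_ctens [simp]: "mor C \<Longrightarrow> mor D \<Longrightarrow> cdom (C \<otimes> D) = cdom C @ cdom D"
  and ccod_ctens [simp]: "mor C \<Longrightarrow> mor D \<Longrightarrow> ccod (C \<otimes> D) = ccod C @ ccod D"
  using mor_rep by (auto simp: ccomp_def ctens_def cdom_def[of C] cdom_def[of D] ccod_def[of C] ccod_def[of D])

lemma ccomp_junk: "\<not> (mor C \<and> mor D \<and> cdom C = ccod D) \<Longrightarrow> C \<odot> D = {}"
  and ctens_junk: "\<not> (mor C \<and> mor D) \<Longrightarrow> C \<otimes> D = {}"
  unfolding ccomp_def ctens_def by auto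

lemma ccomp_empty [simp]: "{} \<odot> D = {}" "C \<odot> {} = {}"
  and ctens_empty [simp]: "{} \<otimes> D = {}" "C \<otimes> {} = {}"
  by (auto simp: ccomp_junk ctens_junk)

lemma mor_or_empty_simps [simp]:
  "mor_or_empty (cls f)" "mor_or_empty (C \<odot> D)" "mor_or_empty (C \<otimes> D)" "mor_or_empty {}"
  unfolding mor_or_empty_def
  by (metis mor_cls cls_ill_formed, metis mor_ccomp ccomp_junk, metis mor_ctens ctens_junk, simp)

lemma mor_cases [case_names mor empty]:
  assumes "mor_or_empty C" "\<And>f. hwf G f \<Longrightarrow> C = cls f \<Longrightarrow> P" "C = {} \<Longrightarrow> P"
  shows P
  using assms mor_rep unfolding mor_or_empty_def by blast

abbreviation I :: "'a list \<Rightarrow> ('o, 'a) hm set" where "I w \<equiv> cls (Id w)"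

lemma cdom_closed [simp]: "mor C \<Longrightarrow> set (cdom C) \<subseteq> gAr G"
  and ccod_closed [simp]: "mor C \<Longrightarrow> set (ccod C) \<subseteq> gAr G"
  using mor_rep hwf_objects unfolding cdom_def ccod_def by blast+

lemma ccomp_assoc: "(C \<odot> D) \<odot> E = C \<odot> (D \<odot> E)"
proof (cases "mor C \<and> mor D \<and> mor E \<and> cdom C = ccod D \<and> cdom D = ccod E")
  case True
  then obtain f g h where "hwf G f" "hwf G g" "hwf G h" "C = cls f" "D = cls g" "E = cls h"
    using mor_rep by metis
  with True show ?thesis by (simp add: cls_eqI heq.comp_assoc flip: cls_Comp)
qed (auto simp: ccomp_junk)

lemma ctens_assoc: "(C \<otimes> D) \<otimes> E = C \<otimes> (D \<otimes> E)"
proof (cases "mor C \<and> mor D \<and> mor E")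
  case True
  then obtain f g h where "hwf G f" "hwf G g" "hwf G h" "C = cls f" "D = cls g" "E = cls h"
    using mor_rep by metis
  then show ?thesis by (simp add: cls_eqI heq.tens_assoc flip: cls_Tens)
qed (auto simp: ctens_junk)

lemma ccomp_id_left: "mor C \<Longrightarrow> ccod C = w \<Longrightarrow> I w \<odot> C = C"
  and ccomp_id_right: "mor C \<Longrightarrow> cdom C = w \<Longrightarrow> C \<odot> I w = C"
  using mor_rep by (metis ccod_cls cls_Comp cls_eqI heq.comp_idl,
                    metis cdom_cls cls_Comp cls_eqI heq.comp_idr)

lemma ctens_unit_left [simp]: "mor_or_empty C \<Longrightarrow> I [] \<otimes> C = C"
  and ctens_unit_right [simp]: "mor_or_empty C \<Longrightarrow> C \<otimes> I [] = C"
  by (erule mor_cases; simp add: cls_eqI heq.tens_unitl heq.tens_unitr flip: cls_Tens)+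

lemma ctens_I: "I w \<otimes> I v = I (w @ v)"
proof (cases "set w \<subseteq> gAr G \<and> set v \<subseteq> gAr G")
  case True
  then show ?thesis by (simp add: cls_eqI heq.tens_id flip: cls_Tens)
qed (auto simp: ctens_junk cls_ill_formed)

lemma interchange:
  assumes "mor A" "mor A'" "mor B" "mor B'" "cdom A = ccod A'" "cdom B = ccod B'"
  shows "(A \<odot> A') \<otimes> (B \<odot> B') = (A \<otimes> B) \<odot> (A' \<otimes> B')"
proof -
  obtain f f' g g' where "hwf G f" "A = cls f" "hwf G f'" "A' = cls f'"
      "hwf G g" "B = cls g" "hwf G g'" "B' = cls g'"
    using assms mor_rep by metis
  with assms show ?thesis by (simp add: cls_eqI heq.interchange flip: cls_Tens cls_Comp)
qed

definition W :: "'a list \<Rightarrow> ('o, 'a) hm set \<Rightarrow> 'a list \<Rightarrow> ('o, 'a) hm set" where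
  "W l C r = I l \<otimes> C \<otimes> I r"

lemma mor_W [simp]: "mor (W l C r) \<longleftrightarrow> set l \<subseteq> gAr G \<and> set r \<subseteq> gAr G \<and> mor C"
  unfolding W_def by auto

lemma cdom_W [simp]: "mor (W l C r) \<Longrightarrow> cdom (W l C r) = l @ cdom C @ r"
  and ccod_W [simp]: "mor (W l C r) \<Longrightarrow> ccod (W l C r) = l @ ccod C @ r"
  unfolding W_def by auto

lemma mor_or_empty_W [simp]: "mor_or_empty (W l C r)"
  unfolding W_def by simp

lemma W_junk: "\<not> mor (W l C r) \<Longrightarrow> W l C r = {}"
  using mor_or_empty_W unfolding mor_or_empty_def by blast

lemma W_nil: "mor_or_empty C \<Longrightarrow> W [] C [] = C"
  unfolding W_def by simp

lemma W_I: "W l (I w) r = I (l @ w @ r)"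
  unfolding W_def by (simp add: ctens_I)

lemma W_W: "W l (W l' C r') r = W (l @ l') C (r' @ r)"
proof -
  have "W l (W l' C r') r = (I l \<otimes> I l') \<otimes> C \<otimes> (I r' \<otimes> I r)"
    unfolding W_def by (simp only: ctens_assoc)
  then show ?thesis unfolding W_def by (simp only: ctens_I)
qed

lemma I_ctens: "mor_or_empty C \<Longrightarrow> I l \<otimes> C = W l C []"
  and ctens_I_right: "mor_or_empty C \<Longrightarrow> C \<otimes> I r = W [] C r"
  unfolding W_def by (simp_all add: ctens_assoc)

lemma I_ccomp_I: "set w \<subseteq> gAr G \<Longrightarrow> I w \<odot> I w = I w"
  by (simp add: ccomp_id_left)

lemma W_ccomp: "W l (C \<odot> D) r = W l C r \<odot> W l D r"
proof (cases "set l \<subseteq> gAr G \<and> set r \<subseteq> gAr G \<and> mor C \<and> mor D \<and> cdom C = ccod D")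
  case True
  have "W l (C \<odot> D) r = (I l \<odot> I l) \<otimes> ((C \<odot> D) \<otimes> (I r \<odot> I r))"
    unfolding W_def using True by (simp add: I_ccomp_I)
  also have "\<dots> = W l C r \<odot> W l D r"
    unfolding W_def using True by (simp add: interchange)
  finally show ?thesis .
next
  case False
  then have "W l C r = {} \<or> W l D r = {} \<or> cdom (W l C r) \<noteq> ccod (W l D r)"
    by (auto intro!: W_junk)
  with False show ?thesis by (auto simp: ccomp_junk W_junk)
qed

lemma W_arg_cong: "A = B \<Longrightarrow> W l A r = W l B r"
  and ccomp_arg_cong: "A = B \<Longrightarrow> A \<odot> K = B \<odot> K"
  by simp_all

lemmas W_simps = W_ccomp W_W W_I W_nil

lemma ctens_split_left: "mor A \<Longrightarrow> mor B \<Longrightarrow> A \<otimes> B = W [] A (ccod B) \<odot> W (cdom A) B []"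
  using interchange[of A "I (cdom A)" "I (ccod B)" B]
  by (simp add: ccomp_id_left ccomp_id_right I_ctens ctens_I_right)

lemma ctens_split_right: "mor A \<Longrightarrow> mor B \<Longrightarrow> A \<otimes> B = W (ccod A) B [] \<odot> W [] A (cdom B)"
  using interchange[of "I (ccod A)" A B "I (cdom B)"]
  by (simp add: ccomp_id_left ccomp_id_right I_ctens ctens_I_right)

lemma W_exchange:
  assumes "mor A" "mor B"
  shows "W l A (m @ ccod B @ r) \<odot> W (l @ cdom A @ m) B r = W (l @ ccod A @ m) B r \<odot> W l A (m @ cdom B @ r)"
proof (cases "set l \<subseteq> gAr G \<and> set m \<subseteq> gAr G \<and> set r \<subseteq> gAr G")
  case True
  have mB: "mor (W m B [])" "cdom (W m B []) = m @ cdom B" "ccod (W m B []) = m @ ccod B"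
    using assms True by simp_all
  have "A \<otimes> W m B [] = W [] A (m @ ccod B) \<odot> W (cdom A @ m) B []"
    using ctens_split_left[OF assms(1) mB(1)] by (simp only: mB W_W append_Nil2)
  moreover have "A \<otimes> W m B [] = W (ccod A @ m) B [] \<odot> W [] A (m @ cdom B)"
    using ctens_split_right[OF assms(1) mB(1)] by (simp only: mB W_W append_Nil append_Nil2)
  ultimately have "W l (W [] A (m @ ccod B) \<odot> W (cdom A @ m) B []) r
      = W l (W (ccod A @ m) B [] \<odot> W [] A (m @ cdom B)) r"
    by simp
  then show ?thesis by (simp add: W_ccomp W_W)
next
  case False
  then have "W l A (m @ ccod B @ r) = {} \<or> W (l @ cdom A @ m) B r = {}"
    "W (l @ ccod A @ m) B r = {} \<or> W l A (m @ cdom B @ r) = {}"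
    by (auto intro!: W_junk)
  then show ?thesis by auto
qed

abbreviation dl :: "'a \<Rightarrow> ('o, 'a) hm set" where "dl g \<equiv> cls (Dl g)"
abbreviation ep :: "'a \<Rightarrow> ('o, 'a) hm set" where "ep g \<equiv> cls (Ep g)"
abbreviation mu :: "'a \<Rightarrow> 'a \<Rightarrow> ('o, 'a) hm set" where "mu g h \<equiv> cls (Mu g h)"
abbreviation et :: "'o \<Rightarrow> ('o, 'a) hm set" where "et i \<equiv> cls (Et i)"
abbreviation an :: "'a \<Rightarrow> ('o, 'a) hm set" where "an g \<equiv> cls (An g)"
abbreviation br :: "'a list \<Rightarrow> 'a list \<Rightarrow> ('o, 'a) hm set" where "br w v \<equiv> cls (Br w v)"

lemma coassoc: "g \<in> gAr G \<Longrightarrow> W [] (dl g) [g] \<odot> dl g = W [g] (dl g) [] \<odot> dl g"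
  using cls_eqI[OF heq.coassoc, of g] by (simp add: cls_Comp cls_Tens ctens_I_right I_ctens)

lemma counitl: "g \<in> gAr G \<Longrightarrow> W [] (ep g) [g] \<odot> dl g = I [g]"
  using cls_eqI[OF heq.counitl, of g] by (simp add: cls_Comp cls_Tens ctens_I_right)

lemma counitr: "g \<in> gAr G \<Longrightarrow> W [g] (ep g) [] \<odot> dl g = I [g]"
  using cls_eqI[OF heq.counitr, of g] by (simp add: cls_Comp cls_Tens I_ctens)

lemma massoc:
  "g \<in> gAr G \<Longrightarrow> h \<in> gAr G \<Longrightarrow> k \<in> gAr G \<Longrightarrow> gtgt G g = gsrc G h \<Longrightarrow> gtgt G h = gsrc G k \<Longrightarrow>
   mu (gcmp G g h) k \<odot> W [] (mu g h) [k] = mu g (gcmp G h k) \<odot> W [g] (mu h k) []"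
  using cls_eqI[OF heq.massoc, of g h k] by (simp add: cls_Comp cls_Tens ctens_I_right I_ctens)

lemma unitr: "g \<in> gAr G \<Longrightarrow> mu g (gid G (gtgt G g)) \<odot> W [g] (et (gtgt G g)) [] = I [g]"
  using cls_eqI[OF heq.unitr, of g] by (simp add: cls_Comp cls_Tens I_ctens)

lemma unitl: "g \<in> gAr G \<Longrightarrow> mu (gid G (gsrc G g)) g \<odot> W [] (et (gsrc G g)) [g] = I [g]"
  using cls_eqI[OF heq.unitl, of g] by (simp add: cls_Comp cls_Tens ctens_I_right)

lemma bialg:
  assumes "g \<in> gAr G" "h \<in> gAr G" "gtgt G g = gsrc G h"
  shows "W [] (mu g h) [gcmp G g h] \<odot> W [g, h] (mu g h) [] \<odot> W [g] (br [g] [h]) [h]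
           \<odot> W [] (dl g) [h, h] \<odot> W [g] (dl h) []
         = dl (gcmp G g h) \<odot> mu g h"
proof -
  have "mu g h \<otimes> mu g h = W [] (mu g h) [gcmp G g h] \<odot> W [g, h] (mu g h) []"
    using assms by (subst ctens_split_left) auto
  moreover have "dl g \<otimes> dl h = W [] (dl g) [h, h] \<odot> W [g] (dl h) []"
    using assms by (subst ctens_split_left) auto
  moreover have "(I [g] \<otimes> br [g] [h]) \<otimes> I [h] = W [g] (br [g] [h]) [h]"
    by (simp add: W_def ctens_assoc)
  ultimately show ?thesis
    using cls_eqI[OF heq.bialg, of g h] assms by (simp add: cls_Comp cls_Tens ccomp_assoc)
qed

lemma counit_mult:
  assumes "g \<in> gAr G" "h \<in> gAr G" "gtgt G g = gsrc G h"
  shows "ep (gcmp G g h) \<odot> mu g h = ep g \<odot> W [g] (ep h) []"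
proof -
  have "ep g \<otimes> ep h = W [] (ep g) [] \<odot> W [g] (ep h) []"
    using assms by (subst ctens_split_left) auto
  then show ?thesis using cls_eqI[OF heq.counit_mult, of g h] assms by (simp add: cls_Comp cls_Tens W_nil)
qed

lemma delta_unit:
  assumes "i \<in> gOb G"
  shows "dl (gid G i) \<odot> et i = W [gid G i] (et i) [] \<odot> et i"
proof -
  have "et i \<otimes> et i = W [gid G i] (et i) [] \<odot> W [] (et i) []"
    using assms by (subst ctens_split_right) auto
  then show ?thesis using cls_eqI[OF heq.delta_unit, of i] assms by (simp add: cls_Comp cls_Tens W_nil)
qed

lemma counit_unit: "i \<in> gOb G \<Longrightarrow> ep (gid G i) \<odot> et i = I []"
  using cls_eqI[OF heq.counit_unit, of i] by (simp add: cls_Comp)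

lemma antipodel: "g \<in> gAr G \<Longrightarrow> mu (ginv G g) g \<odot> W [] (an g) [g] \<odot> dl g = et (gtgt G g) \<odot> ep g"
  using cls_eqI[OF heq.antipodel, of g] by (simp add: cls_Comp cls_Tens ctens_I_right)

lemma antipoder: "g \<in> gAr G \<Longrightarrow> mu g (ginv G g) \<odot> W [g] (an g) [] \<odot> dl g = et (gsrc G g) \<odot> ep g"
  using cls_eqI[OF heq.antipoder, of g] by (simp add: cls_Comp cls_Tens I_ctens)

lemma br_nat:
  assumes "mor F" "mor H"
  shows "br (ccod F) (ccod H) \<odot> (F \<otimes> H) = (H \<otimes> F) \<odot> br (cdom F) (cdom H)"
proof -
  obtain f h where "hwf G f" "F = cls f" "hwf G h" "H = cls h" using assms mor_rep by metis
  then show ?thesis using cls_eqI[OF heq.br_nat, of f h] by (simp add: cls_Comp cls_Tens)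
qed

lemma br_nat_left: "mor F \<Longrightarrow> set v \<subseteq> gAr G \<Longrightarrow> br (ccod F) v \<odot> W [] F v = W v F [] \<odot> br (cdom F) v"
  using br_nat[of F "I v"] by (simp add: ctens_I_right I_ctens)

lemma br_nat_right: "mor F \<Longrightarrow> set w \<subseteq> gAr G \<Longrightarrow> br w (ccod F) \<odot> W w F [] = W [] F w \<odot> br w (cdom F)"
  using br_nat[of "I w" F] by (simp add: ctens_I_right I_ctens)

lemma hex1: "set w \<subseteq> gAr G \<Longrightarrow> set u \<subseteq> gAr G \<Longrightarrow> set v \<subseteq> gAr G \<Longrightarrow>
  br w (u @ v) = W u (br w v) [] \<odot> W [] (br w u) v"
  using cls_eqI[OF heq.hex1, of w u v] by (simp add: cls_Comp cls_Tens ctens_I_right I_ctens)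

lemma hex2: "set w \<subseteq> gAr G \<Longrightarrow> set u \<subseteq> gAr G \<Longrightarrow> set v \<subseteq> gAr G \<Longrightarrow>
  br (w @ u) v = W [] (br w v) u \<odot> W w (br u v) []"
  using cls_eqI[OF heq.hex2, of w u v] by (simp add: cls_Comp cls_Tens ctens_I_right I_ctens)

lemma br_Nil_left: assumes "set v \<subseteq> gAr G" shows "br [] v = I v"
proof -
  have idem: "br [] v \<odot> br [] v = br [] v" using hex2[of "[]" "[]" v] assms by (simp add: W_nil)
  have inv: "br [] v \<odot> cls (BrI [] v) = I v"
    using cls_eqI[OF heq.br_inv1, of "[]" v] assms by (simp add: cls_Comp)
  have "br [] v = br [] v \<odot> I v"
    using assms by (simp add: ccomp_id_right)
  also have "\<dots> = br [] v \<odot> (br [] v \<odot> cls (BrI [] v))" by (simp only: inv)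
  also have "\<dots> = (br [] v \<odot> br [] v) \<odot> cls (BrI [] v)" by (rule ccomp_assoc[symmetric])
  also have "\<dots> = I v" by (simp only: idem inv)
  finally show ?thesis .
qed

lemma br_Nil_right: assumes "set v \<subseteq> gAr G" shows "br v [] = I v"
proof -
  have idem: "br v [] \<odot> br v [] = br v []" using hex1[of v "[]" "[]"] assms by (simp add: W_nil)
  have inv: "br v [] \<odot> cls (BrI v []) = I v"
    using cls_eqI[OF heq.br_inv1, of v "[]"] assms by (simp add: cls_Comp)
  have "br v [] = br v [] \<odot> I v"
    using assms by (simp add: ccomp_id_right)
  also have "\<dots> = br v [] \<odot> (br v [] \<odot> cls (BrI v []))" by (simp only: inv)
  also have "\<dots> = (br v [] \<odot> br v []) \<odot> cls (BrI v [])" by (rule ccomp_assoc[symmetric])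
  also have "\<dots> = I v" by (simp only: idem inv)
  finally show ?thesis .
qed

lemma antipode_unit:
  assumes i: "i \<in> gOb G"
  shows "an (gid G i) \<odot> et i = et i"
proof -
  let ?e = "gid G i"
  have "mu ?e ?e \<odot> W [] (an ?e) [?e] \<odot> dl ?e \<odot> et i = mu ?e ?e \<odot> W [] (an ?e) [?e] \<odot> W [?e] (et i) [] \<odot> et i"
    using delta_unit[OF i] by simp
  also have "\<dots> = mu ?e ?e \<odot> W [?e] (et i) [] \<odot> W [] (an ?e) [] \<odot> et i"
    using W_exchange[of "an ?e" "et i" "[]" "[]" "[]"] i by (simp flip: ccomp_assoc)
  also have "\<dots> = an ?e \<odot> et i"
    using unitr[of ?e] i by (simp add: W_nil ccomp_id_left flip: ccomp_assoc)
  finally have "an ?e \<odot> et i = et i \<odot> ep ?e \<odot> et i"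
    using antipodel[of ?e] i by (simp flip: ccomp_assoc)
  also have "\<dots> = et i"
    using i counit_unit[OF i] by (simp add: ccomp_id_right)
  finally show ?thesis .
qed

subsection \<open>The convolution algebra of \<open>H\<^sub>a \<diamond> H\<^sub>b\<close>\<close>

definition tens_delta :: "'a \<Rightarrow> 'a \<Rightarrow> ('o, 'a) hm set" where
  "tens_delta a b = W [a] (br [a] [b]) [b] \<odot> W [] (dl a) [b, b] \<odot> W [a] (dl b) []"

definition tens_eps :: "'a \<Rightarrow> 'a \<Rightarrow> ('o, 'a) hm set" where
  "tens_eps a b = ep a \<odot> W [a] (ep b) []"

definition tens_delta2 :: "'a \<Rightarrow> 'a \<Rightarrow> ('o, 'a) hm set" where
  "tens_delta2 a b = W [a,b,a] (br [a] [b]) [b] \<odot> W [a] (br [a] [b]) [a,b,b] \<odot> W [a,a] (br [a] [b]) [b,b]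
     \<odot> W [] (dl a) [a,b,b,b] \<odot> W [] (dl a) [b,b,b] \<odot> W [a] (dl b) [b] \<odot> W [a] (dl b) []"

definition conv :: "'a \<Rightarrow> 'a \<Rightarrow> 'a \<Rightarrow> 'a \<Rightarrow> ('o, 'a) hm set \<Rightarrow> ('o, 'a) hm set \<Rightarrow> ('o, 'a) hm set" where
  "conv a b c d F H = mu c d \<odot> W [] F [d] \<odot> W [a,b] H [] \<odot> tens_delta a b"

context
  fixes a b
  assumes a: "a \<in> gAr G" and b: "b \<in> gAr G"
begin

lemma mor_tens_delta [simp]: "mor (tens_delta a b)"
  and cdom_tens_delta [simp]: "cdom (tens_delta a b) = [a,b]"
  and ccod_tens_delta [simp]: "ccod (tens_delta a b) = [a,b,a,b]"
  and mor_tens_eps [simp]: "mor (tens_eps a b)"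
  and cdom_tens_eps [simp]: "cdom (tens_eps a b) = [a,b]"
  and ccod_tens_eps [simp]: "ccod (tens_eps a b) = []"
  using a b by (simp_all add: tens_delta_def tens_eps_def)

lemma tens_counit_right: "W [a,b] (tens_eps a b) [] \<odot> tens_delta a b = I [a,b]"
proof -
  have e1: "W [a,b,a] (ep b) [] \<odot> W [a] (br [a] [b]) [b] = W [a] (br [a] [b]) [] \<odot> W [a,a,b] (ep b) []"
    using W_exchange[of "br [a] [b]" "ep b" "[a]" "[]" "[]"] a b by simp
  have e2: "W [a,b] (ep a) [] \<odot> W [a] (br [a] [b]) [] = W [a] (ep a) [b]"
  proof -
    have "W [b] (ep a) [] \<odot> br [a] [b] = W [] (ep a) [b]"
      using br_nat_left[of "ep a" "[b]"] a b by (simp add: br_Nil_left ccomp_id_left)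
    from W_arg_cong[OF this, of "[a]" "[]"] show ?thesis by (simp add: W_simps)
  qed
  have e3: "W [a,a,b] (ep b) [] \<odot> W [] (dl a) [b, b] = W [] (dl a) [b] \<odot> W [a,b] (ep b) []"
    using W_exchange[of "dl a" "ep b" "[]" "[b]" "[]"] a b by simp
  have e4: "W [a] (ep a) [b] \<odot> W [] (dl a) [b] = I [a,b]"
    using W_arg_cong[OF counitr[OF a], of "[]" "[b]"] by (simp add: W_simps)
  have e5: "W [a,b] (ep b) [] \<odot> W [a] (dl b) [] = I [a,b]"
    using W_arg_cong[OF counitr[OF b], of "[a]" "[]"] by (simp add: W_simps)
  have "W [a,b] (tens_eps a b) [] \<odot> tens_delta a b
     = W [a,b] (ep a) [] \<odot> W [a,b,a] (ep b) [] \<odot> W [a] (br [a] [b]) [b] \<odot> W [] (dl a) [b, b] \<odot> W [a] (dl b) []"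
    unfolding tens_eps_def tens_delta_def by (simp only: W_simps ccomp_assoc append.simps)
  also have "\<dots> = W [a] (ep a) [b] \<odot> W [a,a,b] (ep b) [] \<odot> W [] (dl a) [b, b] \<odot> W [a] (dl b) []"
    by (simp only: ccomp_assoc e1[THEN ccomp_arg_cong, simplified ccomp_assoc]
        e2[THEN ccomp_arg_cong, simplified ccomp_assoc])
  also have "\<dots> = W [a] (ep a) [b] \<odot> W [] (dl a) [b] \<odot> W [a,b] (ep b) [] \<odot> W [a] (dl b) []"
    by (simp only: ccomp_assoc e3[THEN ccomp_arg_cong, simplified ccomp_assoc])
  also have "\<dots> = I [a,b]"
    using a b by (simp only: ccomp_assoc e5 e4[THEN ccomp_arg_cong, simplified ccomp_assoc]) (simp add: I_ccomp_I)
  finally show ?thesis .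
qed

lemma tens_counit_left: "W [] (tens_eps a b) [a,b] \<odot> tens_delta a b = I [a,b]"
proof -
  have e1: "W [a] (ep b) [a,b] \<odot> W [a] (br [a] [b]) [b] = W [a,a] (ep b) [b]"
  proof -
    have "W [] (ep b) [a] \<odot> br [a] [b] = W [a] (ep b) []"
      using br_nat_right[of "ep b" "[a]"] a b by (simp add: br_Nil_right ccomp_id_left)
    from W_arg_cong[OF this, of "[a]" "[b]"] show ?thesis by (simp add: W_simps)
  qed
  have e2: "W [a,a] (ep b) [b] \<odot> W [] (dl a) [b,b] = W [] (dl a) [b] \<odot> W [a] (ep b) [b]"
    using W_exchange[of "dl a" "ep b" "[]" "[]" "[b]"] a b by simp
  have e3: "W [] (ep a) [a,b] \<odot> W [] (dl a) [b] = I [a,b]"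
    using W_arg_cong[OF counitl[OF a], of "[]" "[b]"] by (simp add: W_simps)
  have e4: "W [a] (ep b) [b] \<odot> W [a] (dl b) [] = I [a,b]"
    using W_arg_cong[OF counitl[OF b], of "[a]" "[]"] by (simp add: W_simps)
  have "W [] (tens_eps a b) [a,b] \<odot> tens_delta a b
     = W [] (ep a) [a,b] \<odot> W [a] (ep b) [a,b] \<odot> W [a] (br [a] [b]) [b] \<odot> W [] (dl a) [b, b] \<odot> W [a] (dl b) []"
    unfolding tens_eps_def tens_delta_def by (simp only: W_simps ccomp_assoc append.simps)
  also have "\<dots> = W [] (ep a) [a,b] \<odot> W [] (dl a) [b] \<odot> W [a] (ep b) [b] \<odot> W [a] (dl b) []"
    by (simp only: ccomp_assoc e1[THEN ccomp_arg_cong, simplified ccomp_assoc]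
        e2[THEN ccomp_arg_cong, simplified ccomp_assoc])
  also have "\<dots> = I [a,b]"
    using a b by (simp only: ccomp_assoc e4 e3[THEN ccomp_arg_cong, simplified ccomp_assoc]) (simp add: I_ccomp_I)
  finally show ?thesis .
qed

lemma tens_delta_twice_right: "W [a,b] (tens_delta a b) [] \<odot> tens_delta a b = tens_delta2 a b"
proof -
  have L1: "W [a,b,a] (dl b) [] \<odot> W [a] (br [a] [b]) [b] = W [a] (br [a] [b]) [b,b] \<odot> W [a,a,b] (dl b) []"
    using W_exchange[of "br [a] [b]" "dl b" "[a]" "[]" "[]"] a b by simp
  have L2: "W [a,a,b] (dl b) [] \<odot> W [] (dl a) [b,b] = W [] (dl a) [b,b,b] \<odot> W [a,b] (dl b) []"
    using W_exchange[of "dl a" "dl b" "[]" "[b]" "[]"] a b by simp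
  have L3: "W [a,b] (dl a) [b,b] \<odot> W [a] (br [a] [b]) [b,b]
      = W [a] (br [a] [b]) [a,b,b] \<odot> W [a,a] (br [a] [b]) [b,b] \<odot> W [a] (dl a) [b,b,b]"
  proof -
    have "W [b] (dl a) [] \<odot> br [a] [b] = W [] (br [a] [b]) [a] \<odot> W [a] (br [a] [b]) [] \<odot> W [] (dl a) [b]"
      using br_nat_left[of "dl a" "[b]"] hex2[of "[a]" "[a]" "[b]"] a b by (simp add: ccomp_assoc)
    from W_arg_cong[OF this, of "[a]" "[b,b]"] show ?thesis by (simp add: W_simps)
  qed
  have L4: "W [a] (dl a) [b,b,b] \<odot> W [] (dl a) [b,b,b] = W [] (dl a) [a,b,b,b] \<odot> W [] (dl a) [b,b,b]"
    using W_arg_cong[OF coassoc[OF a], of "[]" "[b,b,b]"] by (simp add: W_simps)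
  have L5: "W [a,b] (dl b) [] \<odot> W [a] (dl b) [] = W [a] (dl b) [b] \<odot> W [a] (dl b) []"
    using W_arg_cong[OF coassoc[OF b], of "[a]" "[]"] by (simp add: W_simps)
  have "W [a,b] (tens_delta a b) [] \<odot> tens_delta a b
      = W [a,b,a] (br [a] [b]) [b] \<odot> W [a,b] (dl a) [b,b] \<odot> W [a,b,a] (dl b) [] \<odot> W [a] (br [a] [b]) [b]
        \<odot> W [] (dl a) [b,b] \<odot> W [a] (dl b) []"
    unfolding tens_delta_def by (simp only: W_simps ccomp_assoc append.simps)
  also have "\<dots> = W [a,b,a] (br [a] [b]) [b] \<odot> W [a,b] (dl a) [b,b] \<odot> W [a] (br [a] [b]) [b,b]
        \<odot> W [a,a,b] (dl b) [] \<odot> W [] (dl a) [b,b] \<odot> W [a] (dl b) []"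
    by (simp only: ccomp_assoc L1[THEN ccomp_arg_cong, simplified ccomp_assoc])
  also have "\<dots> = W [a,b,a] (br [a] [b]) [b] \<odot> W [a] (br [a] [b]) [a,b,b] \<odot> W [a,a] (br [a] [b]) [b,b]
        \<odot> W [a] (dl a) [b,b,b] \<odot> W [] (dl a) [b,b,b] \<odot> W [a,b] (dl b) [] \<odot> W [a] (dl b) []"
    by (simp only: ccomp_assoc L3[THEN ccomp_arg_cong, simplified ccomp_assoc] L2[THEN ccomp_arg_cong, simplified ccomp_assoc])
  also have "\<dots> = tens_delta2 a b"
    unfolding tens_delta2_def by (simp only: ccomp_assoc L4[THEN ccomp_arg_cong, simplified ccomp_assoc] L5)
  finally show ?thesis .
qed

lemma tens_delta_twice_left: "W [] (tens_delta a b) [a,b] \<odot> tens_delta a b = tens_delta2 a b"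
proof -
  have R1: "W [a] (dl b) [a,b] \<odot> W [a] (br [a] [b]) [b]
      = W [a,b] (br [a] [b]) [b] \<odot> W [a] (br [a] [b]) [b,b] \<odot> W [a,a] (dl b) [b]"
  proof -
    have "W [] (dl b) [a] \<odot> br [a] [b] = W [b] (br [a] [b]) [] \<odot> W [] (br [a] [b]) [b] \<odot> W [a] (dl b) []"
      using br_nat_right[of "dl b" "[a]"] hex1[of "[a]" "[b]" "[b]"] a b by (simp add: ccomp_assoc)
    from W_arg_cong[OF this, of "[a]" "[b]"] show ?thesis by (simp add: W_simps)
  qed
  have R2: "W [a,a] (dl b) [b] \<odot> W [] (dl a) [b,b] = W [] (dl a) [b,b,b] \<odot> W [a] (dl b) [b]"
    using W_exchange[of "dl a" "dl b" "[]" "[]" "[b]"] a b by simp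
  have R3: "W [] (dl a) [b,b,a,b] \<odot> W [a,b] (br [a] [b]) [b] = W [a,a,b] (br [a] [b]) [b] \<odot> W [] (dl a) [b,a,b,b]"
    using W_exchange[of "dl a" "br [a] [b]" "[]" "[b]" "[b]"] a b by simp
  have R4: "W [] (dl a) [b,a,b,b] \<odot> W [a] (br [a] [b]) [b,b] = W [a,a] (br [a] [b]) [b,b] \<odot> W [] (dl a) [a,b,b,b]"
    using W_exchange[of "dl a" "br [a] [b]" "[]" "[]" "[b,b]"] a b by simp
  have R5: "W [a] (br [a] [b]) [b,a,b] \<odot> W [a,a,b] (br [a] [b]) [b] = W [a,b,a] (br [a] [b]) [b] \<odot> W [a] (br [a] [b]) [a,b,b]"
    using W_exchange[of "br [a] [b]" "br [a] [b]" "[a]" "[]" "[b]"] a b by simp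
  have "W [] (tens_delta a b) [a,b] \<odot> tens_delta a b
      = W [a] (br [a] [b]) [b,a,b] \<odot> W [] (dl a) [b,b,a,b] \<odot> W [a] (dl b) [a,b] \<odot> W [a] (br [a] [b]) [b]
        \<odot> W [] (dl a) [b,b] \<odot> W [a] (dl b) []"
    unfolding tens_delta_def by (simp only: W_simps ccomp_assoc append.simps)
  also have "\<dots> = W [a] (br [a] [b]) [b,a,b] \<odot> W [] (dl a) [b,b,a,b] \<odot> W [a,b] (br [a] [b]) [b]
        \<odot> W [a] (br [a] [b]) [b,b] \<odot> W [] (dl a) [b,b,b] \<odot> W [a] (dl b) [b] \<odot> W [a] (dl b) []"
    by (simp only: ccomp_assoc R1[THEN ccomp_arg_cong, simplified ccomp_assoc] R2[THEN ccomp_arg_cong, simplified ccomp_assoc])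
  also have "\<dots> = tens_delta2 a b"
    unfolding tens_delta2_def
    by (simp only: ccomp_assoc R3[THEN ccomp_arg_cong, simplified ccomp_assoc]
        R4[THEN ccomp_arg_cong, simplified ccomp_assoc] R5[THEN ccomp_arg_cong, simplified ccomp_assoc])
  finally show ?thesis .
qed

lemma tens_coassoc: "W [a,b] (tens_delta a b) [] \<odot> tens_delta a b = W [] (tens_delta a b) [a,b] \<odot> tens_delta a b"
  by (simp only: tens_delta_twice_left tens_delta_twice_right)

lemma conv_assoc:
  assumes F: "mor F" "cdom F = [a,b]" "ccod F = [c]"
    and H: "mor H" "cdom H = [a,b]" "ccod H = [d]"
    and K: "mor K" "cdom K = [a,b]" "ccod K = [e]"
    and cde: "c \<in> gAr G" "d \<in> gAr G" "e \<in> gAr G" "gtgt G c = gsrc G d" "gtgt G d = gsrc G e"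
  shows "conv a b (gcmp G c d) e (conv a b c d F H) K = conv a b c (gcmp G d e) F (conv a b d e H K)"
proof -
  have E1: "W [] (tens_delta a b) [e] \<odot> W [a,b] K [] = W [a,b,a,b] K [] \<odot> W [] (tens_delta a b) [a,b]"
    using W_exchange[of "tens_delta a b" K "[]" "[]" "[]"] K by simp
  have E2: "W [] F [gcmp G d e] \<odot> W [a,b] (mu d e) [] = W [c] (mu d e) [] \<odot> W [] F [d,e]"
    using W_exchange[of F "mu d e" "[]" "[]" "[]"] F cde by simp
  have E3: "mu c (gcmp G d e) \<odot> W [c] (mu d e) [] = mu (gcmp G c d) e \<odot> W [] (mu c d) [e]"
    using massoc[of c d e] cde by simp
  have "conv a b (gcmp G c d) e (conv a b c d F H) K
     = mu (gcmp G c d) e \<odot> W [] (mu c d) [e] \<odot> W [] F [d,e] \<odot> W [a,b] H [e] \<odot> W [] (tens_delta a b) [e]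
       \<odot> W [a,b] K [] \<odot> tens_delta a b"
    unfolding conv_def by (simp only: W_simps ccomp_assoc append.simps)
  also have "\<dots> = mu (gcmp G c d) e \<odot> W [] (mu c d) [e] \<odot> W [] F [d,e] \<odot> W [a,b] H [e] \<odot> W [a,b,a,b] K []
       \<odot> W [a,b] (tens_delta a b) [] \<odot> tens_delta a b"
    by (simp only: ccomp_assoc E1[THEN ccomp_arg_cong, simplified ccomp_assoc] tens_coassoc)
  also have "\<dots> = mu c (gcmp G d e) \<odot> W [] F [gcmp G d e] \<odot> W [a,b] (mu d e) [] \<odot> W [a,b] H [e]
       \<odot> W [a,b,a,b] K [] \<odot> W [a,b] (tens_delta a b) [] \<odot> tens_delta a b"
    by (simp only: ccomp_assoc E2[THEN ccomp_arg_cong, simplified ccomp_assoc]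
        E3[THEN ccomp_arg_cong, simplified ccomp_assoc, symmetric])
  also have "\<dots> = conv a b c (gcmp G d e) F (conv a b d e H K)"
    unfolding conv_def by (simp only: W_simps ccomp_assoc append.simps)
  finally show ?thesis .
qed

lemma conv_unit_right:
  assumes F: "mor F" "cdom F = [a,b]" "ccod F = [c]" and c: "c \<in> gAr G"
  shows "conv a b c (gid G (gtgt G c)) F (et (gtgt G c) \<odot> tens_eps a b) = F"
proof -
  have E1: "W [] F [gid G (gtgt G c)] \<odot> W [a,b] (et (gtgt G c)) [] = W [c] (et (gtgt G c)) [] \<odot> F"
    using W_exchange[of F "et (gtgt G c)" "[]" "[]" "[]"] F c by (simp add: W_nil)
  have "conv a b c (gid G (gtgt G c)) F (et (gtgt G c) \<odot> tens_eps a b)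
     = mu c (gid G (gtgt G c)) \<odot> W [] F [gid G (gtgt G c)] \<odot> W [a,b] (et (gtgt G c)) []
       \<odot> W [a,b] (tens_eps a b) [] \<odot> tens_delta a b"
    unfolding conv_def by (simp only: W_simps ccomp_assoc append.simps)
  also have "\<dots> = I [c] \<odot> F \<odot> I [a,b]"
    by (simp only: ccomp_assoc E1[THEN ccomp_arg_cong, simplified ccomp_assoc]
        unitr[OF c, THEN ccomp_arg_cong, simplified ccomp_assoc] tens_counit_right)
  also have "\<dots> = F" using F by (simp add: ccomp_id_left ccomp_id_right)
  finally show ?thesis .
qed

lemma conv_unit_left:
  assumes H: "mor H" "cdom H = [a,b]" "ccod H = [d]" and d: "d \<in> gAr G"
  shows "conv a b (gid G (gsrc G d)) d (et (gsrc G d) \<odot> tens_eps a b) H = H"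
proof -
  have E1: "W [] (tens_eps a b) [d] \<odot> W [a,b] H [] = H \<odot> W [] (tens_eps a b) [a,b]"
    using W_exchange[of "tens_eps a b" H "[]" "[]" "[]"] H by (simp add: W_nil)
  have "conv a b (gid G (gsrc G d)) d (et (gsrc G d) \<odot> tens_eps a b) H
     = mu (gid G (gsrc G d)) d \<odot> W [] (et (gsrc G d)) [d] \<odot> W [] (tens_eps a b) [d] \<odot> W [a,b] H []
       \<odot> tens_delta a b"
    unfolding conv_def by (simp only: W_simps ccomp_assoc append.simps)
  also have "\<dots> = I [d] \<odot> H \<odot> I [a,b]"
    by (simp only: ccomp_assoc E1[THEN ccomp_arg_cong, simplified ccomp_assoc]
        unitl[OF d, THEN ccomp_arg_cong, simplified ccomp_assoc] tens_counit_left)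
  also have "\<dots> = H" using H by (simp add: ccomp_id_left ccomp_id_right)
  finally show ?thesis .
qed

end

lemma mu_antipode_absorb:
  assumes b: "b \<in> gAr G" and k: "k \<in> gAr G" "gsrc G k = gsrc G b"
  shows "mu b (gcmp G (ginv G b) k) \<odot> W [b] (mu (ginv G b) k) [] \<odot> W [b] (an b) [k] \<odot> W [] (dl b) [k]
       = W [] (ep b) [k]"
proof -
  have m: "mu b (gcmp G (ginv G b) k) \<odot> W [b] (mu (ginv G b) k) []
      = mu (gid G (gsrc G k)) k \<odot> W [] (mu b (ginv G b)) [k]"
    using massoc[of b "ginv G b" k] b k by simp
  have s: "W [] (mu b (ginv G b)) [k] \<odot> W [b] (an b) [k] \<odot> W [] (dl b) [k]
      = W [] (et (gsrc G k)) [k] \<odot> W [] (ep b) [k]"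
    using W_arg_cong[OF antipoder[OF b], of "[]" "[k]"] k by (simp add: W_simps)
  have "mu b (gcmp G (ginv G b) k) \<odot> W [b] (mu (ginv G b) k) [] \<odot> W [b] (an b) [k] \<odot> W [] (dl b) [k]
      = mu (gid G (gsrc G k)) k \<odot> W [] (et (gsrc G k)) [k] \<odot> W [] (ep b) [k]"
    by (simp only: ccomp_assoc m[THEN ccomp_arg_cong, simplified ccomp_assoc] s)
  also have "\<dots> = W [] (ep b) [k]"
    using unitl[OF k(1)] k b by (simp add: ccomp_id_left flip: ccomp_assoc)
  finally show ?thesis .
qed

definition anti_mu :: "'a \<Rightarrow> 'a \<Rightarrow> ('o, 'a) hm set" where
  "anti_mu a b = mu (ginv G b) (ginv G a) \<odot> W [] (an b) [ginv G a] \<odot> W [b] (an a) [] \<odot> br [a] [b]"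

context
  fixes a b
  assumes a: "a \<in> gAr G" and b: "b \<in> gAr G" and ab: "gtgt G a = gsrc G b"
begin

lemma antipode_mu_conv_mu:
  "conv a b (gcmp G (ginv G b) (ginv G a)) (gcmp G a b) (an (gcmp G a b) \<odot> mu a b) (mu a b)
   = et (gtgt G b) \<odot> tens_eps a b"
proof -
  let ?g = "gcmp G a b" and ?h = "gcmp G (ginv G b) (ginv G a)"
  have S: "mu ?h ?g \<odot> W [] (an ?g) [?g] \<odot> dl ?g = et (gtgt G b) \<odot> ep ?g"
    using antipodel[of ?g] a b ab by simp
  have "conv a b ?h ?g (an ?g \<odot> mu a b) (mu a b)
     = mu ?h ?g \<odot> W [] (an ?g) [?g] \<odot> W [] (mu a b) [?g] \<odot> W [a, b] (mu a b) [] \<odot> W [a] (br [a] [b]) [b]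
       \<odot> W [] (dl a) [b, b] \<odot> W [a] (dl b) []"
    unfolding conv_def tens_delta_def by (simp only: W_simps ccomp_assoc append.simps)
  also have "\<dots> = mu ?h ?g \<odot> W [] (an ?g) [?g] \<odot> dl ?g \<odot> mu a b"
    by (simp only: ccomp_assoc bialg[OF a b ab])
  also have "\<dots> = et (gtgt G b) \<odot> tens_eps a b"
    unfolding tens_eps_def
    by (simp only: ccomp_assoc S[THEN ccomp_arg_cong, simplified ccomp_assoc] counit_mult[OF a b ab])
  finally show ?thesis .
qed

lemma mu_conv_anti_mu:
  "conv a b (gcmp G a b) (gcmp G (ginv G b) (ginv G a)) (mu a b) (anti_mu a b) = et (gsrc G a) \<odot> tens_eps a b"
proof -
  let ?g = "gcmp G a b" and ?h = "gcmp G (ginv G b) (ginv G a)" and ?ai = "ginv G a" and ?bi = "ginv G b"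
  have S1: "mu ?g ?h \<odot> W [] (mu a b) [?h] = mu a ?ai \<odot> W [a] (mu b ?h) []"
    using massoc[of a b ?h] a b ab by simp
  have S2: "W [a,b,b] (an a) [] \<odot> W [a,b] (br [a] [b]) [] \<odot> W [a] (br [a] [b]) [b]
      = W [a] (br [?ai] [b,b]) [] \<odot> W [a] (an a) [b,b]"
  proof -
    have "W [b,b] (an a) [] \<odot> W [b] (br [a] [b]) [] \<odot> W [] (br [a] [b]) [b] = br [?ai] [b,b] \<odot> W [] (an a) [b,b]"
      using hex1[of "[a]" "[b]" "[b]"] br_nat_left[of "an a" "[b,b]"] a b by (simp add: ccomp_assoc)
    from W_arg_cong[OF this, of "[a]" "[]"] show ?thesis by (simp add: W_simps)
  qed
  have S3: "W [] (dl a) [b,b] \<odot> W [a] (dl b) [] = W [a,a] (dl b) [] \<odot> W [] (dl a) [b]"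
    using W_exchange[of "dl a" "dl b" "[]" "[]" "[]"] a b by simp
  have S4: "W [a] (an a) [b,b] \<odot> W [a,a] (dl b) [] = W [a,?ai] (dl b) [] \<odot> W [a] (an a) [b]"
    using W_exchange[of "an a" "dl b" "[a]" "[]" "[]"] a b by simp
  have S5: "W [a] (br [?ai] [b,b]) [] \<odot> W [a,?ai] (dl b) [] = W [a] (dl b) [?ai] \<odot> W [a] (br [?ai] [b]) []"
    using W_arg_cong[OF br_nat_right[of "dl b" "[?ai]"], of "[a]" "[]"] a b by (simp add: W_simps)
  have S6: "W [a] (mu b ?h) [] \<odot> W [a,b] (mu ?bi ?ai) [] \<odot> W [a,b] (an b) [?ai] \<odot> W [a] (dl b) [?ai]
      = W [a] (ep b) [?ai]"
    using W_arg_cong[OF mu_antipode_absorb[of b ?ai], of "[a]" "[]"] a b ab by (simp add: W_simps)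
  have S7: "W [a] (ep b) [?ai] \<odot> W [a] (br [?ai] [b]) [] = W [a,?ai] (ep b) []"
    using W_arg_cong[OF br_nat_right[of "ep b" "[?ai]"], of "[a]" "[]"] a b
    by (simp add: W_simps br_Nil_right ccomp_id_left)
  have S8: "W [a,?ai] (ep b) [] \<odot> W [a] (an a) [b] = W [a] (an a) [] \<odot> W [a,a] (ep b) []"
    using W_exchange[of "an a" "ep b" "[a]" "[]" "[]"] a b by simp
  have S9: "W [a,a] (ep b) [] \<odot> W [] (dl a) [b] = dl a \<odot> W [a] (ep b) []"
    using W_exchange[of "dl a" "ep b" "[]" "[]" "[]"] a b by (simp add: W_nil)
  have "conv a b ?g ?h (mu a b) (anti_mu a b)
    = mu ?g ?h \<odot> W [] (mu a b) [?h] \<odot> W [a,b] (mu ?bi ?ai) [] \<odot> W [a,b] (an b) [?ai] \<odot> W [a,b,b] (an a) []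
      \<odot> W [a,b] (br [a] [b]) [] \<odot> W [a] (br [a] [b]) [b] \<odot> W [] (dl a) [b,b] \<odot> W [a] (dl b) []"
    unfolding conv_def tens_delta_def anti_mu_def by (simp only: W_simps ccomp_assoc append.simps)
  also have "\<dots> = mu a ?ai \<odot> W [a] (mu b ?h) [] \<odot> W [a,b] (mu ?bi ?ai) [] \<odot> W [a,b] (an b) [?ai]
      \<odot> W [a] (br [?ai] [b,b]) [] \<odot> W [a] (an a) [b,b] \<odot> W [a,a] (dl b) [] \<odot> W [] (dl a) [b]"
    by (simp only: ccomp_assoc S1[THEN ccomp_arg_cong, simplified ccomp_assoc]
        S2[THEN ccomp_arg_cong, simplified ccomp_assoc] S3)
  also have "\<dots> = mu a ?ai \<odot> W [a] (mu b ?h) [] \<odot> W [a,b] (mu ?bi ?ai) [] \<odot> W [a,b] (an b) [?ai]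
      \<odot> W [a] (dl b) [?ai] \<odot> W [a] (br [?ai] [b]) [] \<odot> W [a] (an a) [b] \<odot> W [] (dl a) [b]"
    by (simp only: ccomp_assoc S4[THEN ccomp_arg_cong, simplified ccomp_assoc]
        S5[THEN ccomp_arg_cong, simplified ccomp_assoc])
  also have "\<dots> = mu a ?ai \<odot> W [a] (an a) [] \<odot> dl a \<odot> W [a] (ep b) []"
    by (simp only: ccomp_assoc S6[THEN ccomp_arg_cong, simplified ccomp_assoc]
        S7[THEN ccomp_arg_cong, simplified ccomp_assoc] S8[THEN ccomp_arg_cong, simplified ccomp_assoc] S9)
  also have "\<dots> = et (gsrc G a) \<odot> tens_eps a b"
    unfolding tens_eps_def by (simp only: ccomp_assoc antipoder[OF a, THEN ccomp_arg_cong, simplified ccomp_assoc])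
  finally show ?thesis .
qed

text \<open>\<open>S\<^sub>a\<^sub>b m\<^sub>a\<^sub>b\<close> is a left and \<open>anti_mu a b\<close> a right inverse of \<open>m\<^sub>a\<^sub>b\<close> in the
  convolution algebra, so the two agree.\<close>

lemma antipode_mu: "an (gcmp G a b) \<odot> mu a b = anti_mu a b"
proof -
  let ?g = "gcmp G a b" and ?h = "gcmp G (ginv G b) (ginv G a)"
  let ?L = "an ?g \<odot> mu a b"
  have L: "mor ?L" "cdom ?L = [a,b]" "ccod ?L = [?h]"
    and M: "mor (mu a b)" "cdom (mu a b) = [a,b]" "ccod (mu a b) = [?g]"
    and R: "mor (anti_mu a b)" "cdom (anti_mu a b) = [a,b]" "ccod (anti_mu a b) = [?h]"
    and gh: "?h \<in> gAr G" "?g \<in> gAr G"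
    using a b ab by (simp_all add: anti_mu_def)
  have "?L = conv a b ?h (gid G (gsrc G a)) ?L (et (gsrc G a) \<odot> tens_eps a b)"
    using conv_unit_right[OF a b L gh(1)] a b ab by simp
  also have "\<dots> = conv a b ?h (gcmp G ?g ?h) ?L (conv a b ?g ?h (mu a b) (anti_mu a b))"
    using a b ab by (simp add: mu_conv_anti_mu)
  also have "\<dots> = conv a b (gcmp G ?h ?g) ?h (conv a b ?h ?g ?L (mu a b)) (anti_mu a b)"
    using conv_assoc[OF a b L M R gh(1) gh(2) gh(1)] a b ab by simp
  also have "\<dots> = conv a b (gid G (gtgt G b)) ?h (et (gtgt G b) \<odot> tens_eps a b) (anti_mu a b)"
    using a b ab by (simp add: antipode_mu_conv_mu)
  also have "\<dots> = anti_mu a b"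
    using conv_unit_left[OF a b R gh(1)] a b ab by simp
  finally show ?thesis .
qed

end

subsection \<open>The action through the antipode\<close>

text \<open>With \<open>u = y x\<^sup>-\<^sup>1\<close>, \<open>ract u (g\<^sup>x)\<close> is \<open>\<zeta>\<^sup>x\<^sup>,\<^sup>y\<^sub>g\<close> for a generator \<open>g\<close> ending, but not starting, at \<open>k\<^sub>0\<close>.\<close>

definition ract :: "'a \<Rightarrow> 'a \<Rightarrow> ('o, 'a) hm set" where
  "ract u h = mu h (ginv G u) \<odot> W [h] (an u) [] \<odot> br [u] [h]"

lemma mor_ract [simp]: "u \<in> gAr G \<Longrightarrow> h \<in> gAr G \<Longrightarrow> gtgt G h = gtgt G u \<Longrightarrow> mor (ract u h)"
  and cdom_ract [simp]: "u \<in> gAr G \<Longrightarrow> h \<in> gAr G \<Longrightarrow> gtgt G h = gtgt G u \<Longrightarrow> cdom (ract u h) = [u, h]"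
  and ccod_ract [simp]: "u \<in> gAr G \<Longrightarrow> h \<in> gAr G \<Longrightarrow> gtgt G h = gtgt G u \<Longrightarrow>
    ccod (ract u h) = [gcmp G h (ginv G u)]"
  by (simp_all add: ract_def)

lemma br_yang_baxter:
  assumes "set u \<subseteq> gAr G" "set v \<subseteq> gAr G" "set h \<subseteq> gAr G"
  shows "W [] (br u h) v \<odot> br v (u @ h) = W h (br v u) [] \<odot> br (v @ u) h"
proof -
  have "W h (br v u) [] \<odot> br (v @ u) h = br (u @ v) h \<odot> W [] (br v u) h"
    using br_nat_left[of "br v u" h] assms by simp
  also have "\<dots> = W [] (br u h) v \<odot> W u (br v h) [] \<odot> W [] (br v u) h"
    using hex2[of u v h] assms by (simp add: ccomp_assoc)
  also have "\<dots> = W [] (br u h) v \<odot> br v (u @ h)"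
    using hex1[of v u h] assms by (simp add: ccomp_assoc)
  finally show ?thesis by simp
qed

lemma ract_mult:
  assumes u: "u \<in> gAr G" and v: "v \<in> gAr G" and h: "h \<in> gAr G"
    and vu: "gtgt G v = gsrc G u" and hu: "gtgt G h = gtgt G u"
  shows "ract v (gcmp G h (ginv G u)) \<odot> W [v] (ract u h) [] = ract (gcmp G v u) h \<odot> W [] (mu v u) [h]"
proof -
  let ?ui = "ginv G u" and ?vi = "ginv G v" and ?hu = "gcmp G h (ginv G u)"
  note uvh = u v h vu hu
  have A: "br [v] [?hu] \<odot> W [v] (ract u h) []
      = W [] (mu h ?ui) [v] \<odot> W [h] (an u) [v] \<odot> W [] (br [u] [h]) [v] \<odot> br [v] [u,h]"
    using br_nat_right[of "ract u h" "[v]"] uvh by (simp add: ract_def W_simps ccomp_assoc)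
  have B: "W [?hu] (an v) [] \<odot> W [] (mu h ?ui) [v] = W [] (mu h ?ui) [?vi] \<odot> W [h,?ui] (an v) []"
    using W_exchange[of "mu h ?ui" "an v" "[]" "[]" "[]"] uvh by simp
  have C: "mu ?hu ?vi \<odot> W [] (mu h ?ui) [?vi] = mu h (gcmp G ?ui ?vi) \<odot> W [h] (mu ?ui ?vi) []"
    using massoc[of h ?ui ?vi] uvh by simp
  have D: "W [h,?ui] (an v) [] \<odot> W [h] (an u) [v] = W [h] (an u) [?vi] \<odot> W [h,u] (an v) []"
    using W_exchange[of "an u" "an v" "[h]" "[]" "[]"] uvh by simp
  have E: "br [gcmp G v u] [h] \<odot> W [] (mu v u) [h] = W [h] (mu v u) [] \<odot> br [v,u] [h]"
    using br_nat_left[of "mu v u" "[h]"] uvh by simp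
  have F: "W [h] (an (gcmp G v u)) [] \<odot> W [h] (mu v u) []
      = W [h] (mu ?ui ?vi) [] \<odot> W [h] (an u) [?vi] \<odot> W [h,u] (an v) [] \<odot> W [h] (br [v] [u]) []"
    using W_arg_cong[OF antipode_mu[OF v u vu], of "[h]" "[]"] by (simp add: anti_mu_def W_simps)
  have Y: "W [] (br [u] [h]) [v] \<odot> br [v] [u,h] = W [h] (br [v] [u]) [] \<odot> br [v,u] [h]"
    using br_yang_baxter[of "[u]" "[v]" "[h]"] u v h by simp
  have "ract v ?hu \<odot> W [v] (ract u h) [] = mu ?hu ?vi \<odot> W [?hu] (an v) [] \<odot> br [v] [?hu] \<odot> W [v] (ract u h) []"
    unfolding ract_def[of v] by (simp only: ccomp_assoc)
  also have "\<dots> = mu ?hu ?vi \<odot> W [?hu] (an v) [] \<odot> W [] (mu h ?ui) [v] \<odot> W [h] (an u) [v]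
      \<odot> W [] (br [u] [h]) [v] \<odot> br [v] [u,h]"
    by (simp only: A)
  also have "\<dots> = mu h (gcmp G ?ui ?vi) \<odot> W [h] (mu ?ui ?vi) [] \<odot> W [h] (an u) [?vi] \<odot> W [h,u] (an v) []
      \<odot> W [h] (br [v] [u]) [] \<odot> br [v,u] [h]"
    by (simp only: ccomp_assoc B[THEN ccomp_arg_cong, simplified ccomp_assoc]
        C[THEN ccomp_arg_cong, simplified ccomp_assoc] D[THEN ccomp_arg_cong, simplified ccomp_assoc] Y)
  also have "\<dots> = mu h (gcmp G ?ui ?vi) \<odot> W [h] (an (gcmp G v u)) [] \<odot> br [gcmp G v u] [h] \<odot> W [] (mu v u) [h]"
    by (simp only: ccomp_assoc E F[THEN ccomp_arg_cong, simplified ccomp_assoc, symmetric])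
  also have "\<dots> = ract (gcmp G v u) h \<odot> W [] (mu v u) [h]"
    unfolding ract_def using uvh by (simp add: ccomp_assoc)
  finally show ?thesis .
qed

lemma ract_mu:
  assumes a: "a \<in> gAr G" and k: "k \<in> gAr G" and v: "v \<in> gAr G"
    and ak: "gtgt G a = gsrc G k" and kv: "gtgt G k = gtgt G v"
  shows "ract v (gcmp G a k) \<odot> W [v] (mu a k) []
       = mu a (gcmp G k (ginv G v)) \<odot> W [a] (ract v k) [] \<odot> W [] (br [v] [a]) [k]"
proof -
  let ?vi = "ginv G v" and ?ak = "gcmp G a k"
  note akv = a k v ak kv
  have A: "br [v] [?ak] \<odot> W [v] (mu a k) [] = W [] (mu a k) [v] \<odot> br [v] [a,k]"
    using br_nat_right[of "mu a k" "[v]"] akv by simp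
  have B: "W [?ak] (an v) [] \<odot> W [] (mu a k) [v] = W [] (mu a k) [?vi] \<odot> W [a,k] (an v) []"
    using W_exchange[of "mu a k" "an v" "[]" "[]" "[]"] akv by simp
  have C: "mu ?ak ?vi \<odot> W [] (mu a k) [?vi] = mu a (gcmp G k ?vi) \<odot> W [a] (mu k ?vi) []"
    using massoc[of a k ?vi] akv by simp
  have D: "br [v] [a,k] = W [a] (br [v] [k]) [] \<odot> W [] (br [v] [a]) [k]"
    using hex1[of "[v]" "[a]" "[k]"] akv by simp
  have "ract v ?ak \<odot> W [v] (mu a k) [] = mu ?ak ?vi \<odot> W [?ak] (an v) [] \<odot> br [v] [?ak] \<odot> W [v] (mu a k) []"
    unfolding ract_def by (simp only: ccomp_assoc)
  also have "\<dots> = mu a (gcmp G k ?vi) \<odot> W [a] (mu k ?vi) [] \<odot> W [a,k] (an v) [] \<odot> br [v] [a,k]"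
    by (simp only: A ccomp_assoc B[THEN ccomp_arg_cong, simplified ccomp_assoc]
        C[THEN ccomp_arg_cong, simplified ccomp_assoc])
  also have "\<dots> = mu a (gcmp G k ?vi) \<odot> W [a] (ract v k) [] \<odot> W [] (br [v] [a]) [k]"
    unfolding ract_def D by (simp only: W_simps ccomp_assoc append.simps append_Nil2)
  finally show ?thesis .
qed

subsection \<open>Multiplicativity of coproduct-twisted composites\<close>

definition delta_comp :: "'a \<Rightarrow> ('o, 'a) hm set \<Rightarrow> ('o, 'a) hm set \<Rightarrow> 'a list \<Rightarrow> ('o, 'a) hm set" where
  "delta_comp u P Q Y = P \<odot> W [u] Q [] \<odot> W [] (dl u) Y"

lemma delta_comp_mult:
  assumes u: "u \<in> gAr G" and v: "v \<in> gAr G" and vu: "gtgt G v = gsrc G u"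
    and Q1: "mor Q1" "cdom Q1 = u # Ya" "ccod Q1 = Ma"
    and P1: "mor P1" "cdom P1 = u # Ma" "ccod P1 = Yb"
    and Q2: "mor Q2" "cdom Q2 = v # Yb" "ccod Q2 = Mb"
    and P2: "mor P2" "cdom P2 = v # Mb" "ccod P2 = Yc"
    and Q3: "mor Q3" "cdom Q3 = gcmp G v u # Ya" "ccod Q3 = Mc"
    and P3: "mor P3" "cdom P3 = gcmp G v u # Mc" "ccod P3 = Yc"
    and Q': "mor Q'" "cdom Q' = v # Ma" "ccod Q' = Mc"
    and P': "mor P'" "cdom P' = u # Mc" "ccod P' = Mb"
    and commute: "Q2 \<odot> W [v] P1 [] = P' \<odot> W [u] Q' [] \<odot> W [] (br [v] [u]) Ma"
    and Q_mult: "Q' \<odot> W [v] Q1 [] = Q3 \<odot> W [] (mu v u) Ya"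
    and P_mult: "P2 \<odot> W [v] P' [] = P3 \<odot> W [] (mu v u) Mc"
  shows "delta_comp v P2 Q2 Yb \<odot> W [v] (delta_comp u P1 Q1 Ya) []
       = delta_comp (gcmp G v u) P3 Q3 Ya \<odot> W [] (mu v u) Ya"
proof -
  have G1: "W [] (dl v) Yb \<odot> W [v] P1 [] = W [v,v] P1 [] \<odot> W [] (dl v) (u # Ma)"
    using W_exchange[of "dl v" P1 "[]" "[]" "[]"] v P1 by simp
  have G2: "W [v] Q2 [] \<odot> W [v,v] P1 [] = W [v] P' [] \<odot> W [v,u] Q' [] \<odot> W [v] (br [v] [u]) Ma"
    using W_arg_cong[OF commute, of "[v]" "[]"] by (simp add: W_simps)
  have G3: "W [] (dl v) (u # Ma) \<odot> W [v,u] Q1 [] = W [v,v,u] Q1 [] \<odot> W [] (dl v) (u # u # Ya)"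
    using W_exchange[of "dl v" Q1 "[]" "[u]" "[]"] v Q1 by simp
  have G4: "W [v] (br [v] [u]) Ma \<odot> W [v,v,u] Q1 [] = W [v,u,v] Q1 [] \<odot> W [v] (br [v] [u]) (u # Ya)"
    using W_exchange[of "br [v] [u]" Q1 "[v]" "[]" "[]"] u v Q1 by simp
  have G5: "W [v,u] Q' [] \<odot> W [v,u,v] Q1 [] = W [v,u] Q3 [] \<odot> W [v,u] (mu v u) Ya"
    using W_arg_cong[OF Q_mult, of "[v,u]" "[]"] by (simp add: W_simps)
  have G6: "W [] (mu v u) Mc \<odot> W [v,u] Q3 [] = W [gcmp G v u] Q3 [] \<odot> W [] (mu v u) (gcmp G v u # Ya)"
    using W_exchange[of "mu v u" Q3 "[]" "[]" "[]"] u v vu Q3 by simp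
  have G7: "W [] (mu v u) (gcmp G v u # Ya) \<odot> W [v,u] (mu v u) Ya \<odot> W [v] (br [v] [u]) (u # Ya)
      \<odot> W [] (dl v) (u # u # Ya) \<odot> W [v] (dl u) Ya
     = W [] (dl (gcmp G v u)) Ya \<odot> W [] (mu v u) Ya"
    using W_arg_cong[OF bialg[OF v u vu], of "[]" Ya] by (simp add: W_simps)
  have "delta_comp v P2 Q2 Yb \<odot> W [v] (delta_comp u P1 Q1 Ya) []
     = P2 \<odot> W [v] Q2 [] \<odot> W [] (dl v) Yb \<odot> W [v] P1 [] \<odot> W [v,u] Q1 [] \<odot> W [v] (dl u) Ya"
    unfolding delta_comp_def by (simp only: W_simps ccomp_assoc append.simps append_Nil2)
  also have "\<dots> = P2 \<odot> W [v] P' [] \<odot> W [v,u] Q' [] \<odot> W [v,u,v] Q1 [] \<odot> W [v] (br [v] [u]) (u # Ya)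
      \<odot> W [] (dl v) (u # u # Ya) \<odot> W [v] (dl u) Ya"
    by (simp only: ccomp_assoc G1[THEN ccomp_arg_cong, simplified ccomp_assoc]
        G2[THEN ccomp_arg_cong, simplified ccomp_assoc] G3[THEN ccomp_arg_cong, simplified ccomp_assoc]
        G4[THEN ccomp_arg_cong, simplified ccomp_assoc])
  also have "\<dots> = P3 \<odot> W [gcmp G v u] Q3 [] \<odot> W [] (dl (gcmp G v u)) Ya \<odot> W [] (mu v u) Ya"
    by (simp only: ccomp_assoc G5[THEN ccomp_arg_cong, simplified ccomp_assoc]
        P_mult[THEN ccomp_arg_cong, simplified ccomp_assoc] G6[THEN ccomp_arg_cong, simplified ccomp_assoc] G7)
  finally show ?thesis unfolding delta_comp_def by (simp only: ccomp_assoc)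
qed

lemma delta_comp_ract_mult:
  assumes u: "u \<in> gAr G" and v: "v \<in> gAr G" and h: "h \<in> gAr G" and vu: "gtgt G v = gsrc G u"
    and hs: "gsrc G h = gtgt G u" and ht: "gtgt G h = gtgt G u"
    and hu: "hu = gcmp G h (ginv G u)" and hy: "hy = gcmp G u hu" and w: "w = gcmp G v u"
    and huv: "huv = gcmp G hu (ginv G v)" and hyv: "hyv = gcmp G hy (ginv G v)"
  shows "delta_comp v (mu v hyv) (ract v hy) [hy] \<odot> W [v] (delta_comp u (mu u hu) (ract u h) [h]) []
       = delta_comp w (mu w huv) (ract w h) [h] \<odot> W [] (mu v u) [h]"
proof -
  have ar: "hu \<in> gAr G" "hy \<in> gAr G" "huv \<in> gAr G"
    and src_tgt: "gtgt G u = gsrc G hu" "gtgt G hu = gtgt G v" "gtgt G u = gsrc G huv"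
    and eq: "gcmp G u huv = hyv"
    using u v h vu hs ht hu hy huv hyv by simp_all
  show ?thesis
    unfolding w
  proof (rule delta_comp_mult[OF u v vu])
    show "ract v hy \<odot> W [v] (mu u hu) [] = mu u huv \<odot> W [u] (ract v hu) [] \<odot> W [] (br [v] [u]) [hu]"
      using ract_mu[OF u ar(1) v src_tgt(1,2), folded hy huv] .
    show "ract v hu \<odot> W [v] (ract u h) [] = ract (gcmp G v u) h \<odot> W [] (mu v u) [h]"
      using ract_mult[OF u v h vu ht] by (simp only: hu)
    show "mu v hyv \<odot> W [v] (mu u huv) [] = mu (gcmp G v u) huv \<odot> W [] (mu v u) [huv]"
      using massoc[OF v u ar(3) vu src_tgt(3), unfolded eq] by simp
  qed (use u v h vu hs ht hu hy huv hyv in simp_all)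
qed

lemma gconj_eq:
  assumes "x \<in> gAr G" "g \<in> gAr G"
  shows "gsrc G g \<noteq> gtgt G x \<Longrightarrow> gtgt G g \<noteq> gtgt G x \<Longrightarrow> gconj G x g = g"
    and "gsrc G g = gtgt G x \<Longrightarrow> gtgt G g \<noteq> gtgt G x \<Longrightarrow> gconj G x g = gcmp G x g"
    and "gsrc G g \<noteq> gtgt G x \<Longrightarrow> gtgt G g = gtgt G x \<Longrightarrow> gconj G x g = gcmp G g (ginv G x)"
    and "gsrc G g = gtgt G x \<Longrightarrow> gtgt G g = gtgt G x \<Longrightarrow> gconj G x g = gcmp G x (gcmp G g (ginv G x))"
  using assms by (auto simp: gconj_def Let_def)

lemma gconj_closed [simp]: "x \<in> gAr G \<Longrightarrow> g \<in> gAr G \<Longrightarrow> gconj G x g \<in> gAr G"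
  by (cases "gsrc G g = gtgt G x"; cases "gtgt G g = gtgt G x") (simp_all add: gconj_eq)

lemma wconj_closed: "x \<in> gAr G \<Longrightarrow> set A \<subseteq> gAr G \<Longrightarrow> set (wconj G x A) \<subseteq> gAr G"
  by (auto simp: wconj_def)

context
  fixes x y g
  assumes x: "x \<in> gAr G" and y: "y \<in> gAr G" and g: "g \<in> gAr G" and xy: "gtgt G y = gtgt G x"
begin

lemma cls_zeta1_other:
  "gsrc G g \<noteq> gtgt G x \<Longrightarrow> gtgt G g \<noteq> gtgt G x \<Longrightarrow>
   cls (zeta1 G x y g) = W [] (ep (gcmp G y (ginv G x))) [gconj G x g]"
  unfolding zeta1_def Let_def by (simp add: cls_Tens ctens_I_right)

lemma cls_zeta1_out:
  "gsrc G g = gtgt G x \<Longrightarrow> gtgt G g \<noteq> gtgt G x \<Longrightarrow>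
   cls (zeta1 G x y g) = mu (gcmp G y (ginv G x)) (gconj G x g)"
  unfolding zeta1_def Let_def by simp

lemma cls_zeta1_in:
  "gsrc G g \<noteq> gtgt G x \<Longrightarrow> gtgt G g = gtgt G x \<Longrightarrow>
   cls (zeta1 G x y g) = ract (gcmp G y (ginv G x)) (gconj G x g)"
  unfolding zeta1_def Let_def ract_def using x y xy by (simp add: cls_Comp cls_Tens I_ctens)

lemma cls_zeta1_loop:
  "gsrc G g = gtgt G x \<Longrightarrow> gtgt G g = gtgt G x \<Longrightarrow>
   cls (zeta1 G x y g) = delta_comp (gcmp G y (ginv G x))
     (mu (gcmp G y (ginv G x)) (gcmp G (gconj G x g) (ginv G (gcmp G y (ginv G x)))))
     (ract (gcmp G y (ginv G x)) (gconj G x g)) [gconj G x g]"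
  unfolding zeta1_def Let_def delta_comp_def ract_def using x y xy
  by (simp add: cls_Comp cls_Tens I_ctens ctens_I_right W_simps ccomp_assoc)

lemma zeta1_mor:
  "mor (cls (zeta1 G x y g)) \<and> cdom (cls (zeta1 G x y g)) = [gcmp G y (ginv G x), gconj G x g]
   \<and> ccod (cls (zeta1 G x y g)) = [gconj G y g]"
  using x y g xy
  by (cases "gsrc G g = gtgt G x"; cases "gtgt G g = gtgt G x")
    (simp_all add: cls_zeta1_other cls_zeta1_out cls_zeta1_in cls_zeta1_loop delta_comp_def gconj_eq)

end

lemma zeta1_mult:
  assumes x: "x \<in> gAr G" and y: "y \<in> gAr G" and z: "z \<in> gAr G" and g: "g \<in> gAr G"
    and xy: "gtgt G y = gtgt G x" and xz: "gtgt G z = gtgt G x"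
  shows "cls (zeta1 G y z g) \<odot> W [gcmp G z (ginv G y)] (cls (zeta1 G x y g)) []
       = cls (zeta1 G x z g) \<odot> W [] (mu (gcmp G z (ginv G y)) (gcmp G y (ginv G x))) [gconj G x g]"
proof -
  let ?u = "gcmp G y (ginv G x)" and ?v = "gcmp G z (ginv G y)"
  have yz: "gtgt G z = gtgt G y" using xy xz by simp
  have uv: "?u \<in> gAr G" "?v \<in> gAr G" "gtgt G ?v = gsrc G ?u" using x y z xy xz by simp_all
  show ?thesis
  proof (cases "gsrc G g = gtgt G x"; cases "gtgt G g = gtgt G x")
    assume a: "gsrc G g = gtgt G x" "gtgt G g = gtgt G x"
    show ?thesis
      unfolding cls_zeta1_loop[OF x y g xy a] cls_zeta1_loop[OF y z g yz a[unfolded xy[symmetric]]]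
        cls_zeta1_loop[OF x z g xz a]
      by (rule delta_comp_ract_mult) (use x y z g xy xz a in \<open>simp_all add: gconj_eq\<close>)
  next
    assume a: "gsrc G g = gtgt G x" "gtgt G g \<noteq> gtgt G x"
    have "gconj G x g \<in> gAr G" "gtgt G ?u = gsrc G (gconj G x g)" using x y g xy a by (simp_all add: gconj_eq)
    from massoc[OF uv(2) uv(1) this(1) uv(3) this(2)] show ?thesis
      unfolding cls_zeta1_out[OF x y g xy a] cls_zeta1_out[OF y z g yz a[unfolded xy[symmetric]]]
        cls_zeta1_out[OF x z g xz a]
      using x y z g xy xz a by (simp add: gconj_eq)
  next
    assume a: "gsrc G g \<noteq> gtgt G x" "gtgt G g = gtgt G x"
    have "gconj G x g \<in> gAr G" "gtgt G (gconj G x g) = gtgt G ?u" using x y g xy a by (simp_all add: gconj_eq)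
    from ract_mult[OF uv(1) uv(2) this(1) uv(3) this(2)] show ?thesis
      unfolding cls_zeta1_in[OF x y g xy a] cls_zeta1_in[OF y z g yz a[unfolded xy[symmetric]]]
        cls_zeta1_in[OF x z g xz a]
      using x y z g xy xz a by (simp add: gconj_eq)
  next
    assume a: "gsrc G g \<noteq> gtgt G x" "gtgt G g \<noteq> gtgt G x"
    have "W [] (ep (gcmp G ?v ?u)) [g] \<odot> W [] (mu ?v ?u) [g] = W [] (ep ?v \<odot> W [?v] (ep ?u) []) [g]"
      using counit_mult[OF uv(2) uv(1) uv(3)] by (simp only: W_simps flip: W_ccomp)
    then show ?thesis
      unfolding cls_zeta1_other[OF x y g xy a] cls_zeta1_other[OF y z g yz a[unfolded xy[symmetric]]]
        cls_zeta1_other[OF x z g xz a]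
      using x y z g xy xz a by (simp add: gconj_eq W_simps)
  qed
qed

lemma br_tens_commute:
  assumes u: "u \<in> gAr G" and v: "v \<in> gAr G"
    and B: "mor ZB" "cdom ZB = u # Bx" "ccod ZB = By"
    and Zg: "mor Zg" "cdom Zg = [v, gy]" "ccod Zg = [gz]"
  shows "(W By Zg [] \<odot> W [] (br [v] By) [gy]) \<odot> W [v] (W [] ZB [gy]) []
       = W [] ZB [gz] \<odot> W [u] (W Bx Zg [] \<odot> W [] (br [v] Bx) [gy]) [] \<odot> W [] (br [v] [u]) (Bx @ [gy])"
proof -
  have Bx: "set Bx \<subseteq> gAr G" using cdom_closed[OF B(1)] B(2) by simp
  have e1: "W [] (br [v] By) [gy] \<odot> W [v] ZB [gy] = W [] ZB [v, gy] \<odot> W [] (br [v] (u # Bx)) [gy]"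
    using W_arg_cong[OF br_nat_right[of ZB "[v]"], of "[]" "[gy]"] B v by (simp add: W_simps)
  have e2: "W By Zg [] \<odot> W [] ZB [v, gy] = W [] ZB [gz] \<odot> W (u # Bx) Zg []"
    using W_exchange[of ZB Zg "[]" "[]" "[]"] B Zg by simp
  have e3: "W [] (br [v] (u # Bx)) [gy] = W [u] (br [v] Bx) [gy] \<odot> W [] (br [v] [u]) (Bx @ [gy])"
    using W_arg_cong[OF hex1[of "[v]" "[u]" Bx], of "[]" "[gy]"] u v Bx by (simp add: W_simps)
  have "(W By Zg [] \<odot> W [] (br [v] By) [gy]) \<odot> W [v] (W [] ZB [gy]) []
      = W By Zg [] \<odot> W [] (br [v] By) [gy] \<odot> W [v] ZB [gy]"
    by (simp only: W_simps ccomp_assoc append.simps append_Nil2)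
  also have "\<dots> = W [] ZB [gz] \<odot> W (u # Bx) Zg [] \<odot> W [u] (br [v] Bx) [gy] \<odot> W [] (br [v] [u]) (Bx @ [gy])"
    by (simp only: ccomp_assoc e1 e2[THEN ccomp_arg_cong, simplified ccomp_assoc] e3)
  also have "\<dots> = W [] ZB [gz] \<odot> W [u] (W Bx Zg [] \<odot> W [] (br [v] Bx) [gy]) [] \<odot> W [] (br [v] [u]) (Bx @ [gy])"
    by (simp only: W_simps ccomp_assoc append.simps append_Nil2)
  finally show ?thesis .
qed

lemma br_tens_mult:
  assumes u: "u \<in> gAr G" and v: "v \<in> gAr G" and vu: "gtgt G v = gsrc G u" and Bx: "set Bx \<subseteq> gAr G"
    and xy: "mor Zxy" "cdom Zxy = [u, gx]" "ccod Zxy = [gy]"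
    and yz: "mor Zyz" "cdom Zyz = [v, gy]" "ccod Zyz = [gz]"
    and xz: "mor Zxz" "cdom Zxz = [gcmp G v u, gx]" "ccod Zxz = [gz]"
    and mult: "Zyz \<odot> W [v] Zxy [] = Zxz \<odot> W [] (mu v u) [gx]"
  shows "(W Bx Zyz [] \<odot> W [] (br [v] Bx) [gy]) \<odot> W [v] (W Bx Zxy [] \<odot> W [] (br [u] Bx) [gx]) []
       = (W Bx Zxz [] \<odot> W [] (br [gcmp G v u] Bx) [gx]) \<odot> W [] (mu v u) (Bx @ [gx])"
proof -
  have f1: "W [] (br [v] Bx) [gy] \<odot> W (v # Bx) Zxy [] = W (Bx @ [v]) Zxy [] \<odot> W [] (br [v] Bx) [u, gx]"
    using W_exchange[of "br [v] Bx" Zxy "[]" "[]" "[]"] xy v Bx by simp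
  have f2: "W Bx Zyz [] \<odot> W (Bx @ [v]) Zxy [] = W Bx Zxz [] \<odot> W Bx (mu v u) [gx]"
    using W_arg_cong[OF mult, of Bx "[]"] by (simp add: W_simps)
  have f3: "W [] (br [v] Bx) [u, gx] \<odot> W [v] (br [u] Bx) [gx] = W [] (br [v,u] Bx) [gx]"
    using W_arg_cong[OF hex2[of "[v]" "[u]" Bx], of "[]" "[gx]"] u v Bx by (simp add: W_simps)
  have f4: "W Bx (mu v u) [gx] \<odot> W [] (br [v,u] Bx) [gx] = W [] (br [gcmp G v u] Bx) [gx] \<odot> W [] (mu v u) (Bx @ [gx])"
    using W_arg_cong[OF br_nat_left[of "mu v u" Bx], of "[]" "[gx]"] u v vu Bx by (simp add: W_simps)
  have "(W Bx Zyz [] \<odot> W [] (br [v] Bx) [gy]) \<odot> W [v] (W Bx Zxy [] \<odot> W [] (br [u] Bx) [gx]) []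
      = W Bx Zyz [] \<odot> W [] (br [v] Bx) [gy] \<odot> W (v # Bx) Zxy [] \<odot> W [v] (br [u] Bx) [gx]"
    by (simp only: W_simps ccomp_assoc append.simps append_Nil2)
  also have "\<dots> = W Bx Zxz [] \<odot> W Bx (mu v u) [gx] \<odot> W [] (br [v] Bx) [u, gx] \<odot> W [v] (br [u] Bx) [gx]"
    by (simp only: ccomp_assoc f1[THEN ccomp_arg_cong, simplified ccomp_assoc]
        f2[THEN ccomp_arg_cong, simplified ccomp_assoc])
  also have "\<dots> = (W Bx Zxz [] \<odot> W [] (br [gcmp G v u] Bx) [gx]) \<odot> W [] (mu v u) (Bx @ [gx])"
    by (simp only: ccomp_assoc f3 f4)
  finally show ?thesis .
qed

lemma delta_comp_tens_mult:
  assumes u: "u \<in> gAr G" and v: "v \<in> gAr G" and vu: "gtgt G v = gsrc G u"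
    and Bxy: "mor ZBxy" "cdom ZBxy = u # Bx" "ccod ZBxy = By"
    and Byz: "mor ZByz" "cdom ZByz = v # By" "ccod ZByz = Bz"
    and Bxz: "mor ZBxz" "cdom ZBxz = gcmp G v u # Bx" "ccod ZBxz = Bz"
    and gxy: "mor Zgxy" "cdom Zgxy = [u, gx]" "ccod Zgxy = [gy]"
    and gyz: "mor Zgyz" "cdom Zgyz = [v, gy]" "ccod Zgyz = [gz]"
    and gxz: "mor Zgxz" "cdom Zgxz = [gcmp G v u, gx]" "ccod Zgxz = [gz]"
    and B_mult: "ZByz \<odot> W [v] ZBxy [] = ZBxz \<odot> W [] (mu v u) Bx"
    and g_mult: "Zgyz \<odot> W [v] Zgxy [] = Zgxz \<odot> W [] (mu v u) [gx]"
  shows "delta_comp v (ZByz \<otimes> Zgyz) (W [] (br [v] By) [gy]) (By @ [gy])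
           \<odot> W [v] (delta_comp u (ZBxy \<otimes> Zgxy) (W [] (br [u] Bx) [gx]) (Bx @ [gx])) []
       = delta_comp (gcmp G v u) (ZBxz \<otimes> Zgxz) (W [] (br [gcmp G v u] Bx) [gx]) (Bx @ [gx])
           \<odot> W [] (mu v u) (Bx @ [gx])"
proof -
  have sets: "set Bx \<subseteq> gAr G" "set By \<subseteq> gAr G" "gx \<in> gAr G" "gy \<in> gAr G" "gz \<in> gAr G"
    using cdom_closed[OF Bxy(1)] ccod_closed[OF Bxy(1)] cdom_closed[OF gxy(1)] ccod_closed[OF gxy(1)]
      ccod_closed[OF gyz(1)] Bxy gxy gyz by auto
  have split: "\<And>w ZB Zg B g g'. mor ZB \<Longrightarrow> mor Zg \<Longrightarrow> cdom ZB = w # B \<Longrightarrow> ccod Zg = [g'] \<Longrightarrow>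
      cdom Zg = [w, g] \<Longrightarrow> set B \<subseteq> gAr G \<Longrightarrow>
      delta_comp w (ZB \<otimes> Zg) (W [] (br [w] B) [g]) (B @ [g])
      = delta_comp w (W [] ZB [g']) (W B Zg [] \<odot> W [] (br [w] B) [g]) (B @ [g])"
    unfolding delta_comp_def by (simp add: ctens_split_left W_simps ccomp_assoc)
  have B_mult': "W [] ZByz [gz] \<odot> W [v] (W [] ZBxy [gz]) [] = W [] ZBxz [gz] \<odot> W [] (mu v u) (Bx @ [gz])"
    using W_arg_cong[OF B_mult, of "[]" "[gz]"] by (simp add: W_simps)
  show ?thesis
    unfolding split[OF Bxy(1) gxy(1) Bxy(2) gxy(3) gxy(2) sets(1)]
      split[OF Byz(1) gyz(1) Byz(2) gyz(3) gyz(2) sets(2)] split[OF Bxz(1) gxz(1) Bxz(2) gxz(3) gxz(2) sets(1)]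
  proof (rule delta_comp_mult[OF u v vu])
    show "(W By Zgyz [] \<odot> W [] (br [v] By) [gy]) \<odot> W [v] (W [] ZBxy [gy]) []
       = W [] ZBxy [gz] \<odot> W [u] (W Bx Zgyz [] \<odot> W [] (br [v] Bx) [gy]) [] \<odot> W [] (br [v] [u]) (Bx @ [gy])"
      by (rule br_tens_commute[OF u v Bxy gyz])
    show "(W Bx Zgyz [] \<odot> W [] (br [v] Bx) [gy]) \<odot> W [v] (W Bx Zgxy [] \<odot> W [] (br [u] Bx) [gx]) []
       = (W Bx Zgxz [] \<odot> W [] (br [gcmp G v u] Bx) [gx]) \<odot> W [] (mu v u) (Bx @ [gx])"
      by (rule br_tens_mult[OF u v vu sets(1) gxy gyz gxz g_mult])
  qed (use u v vu sets Bxy Byz Bxz gxy gyz gxz B_mult' in simp_all)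
qed

lemma wconj_rev_Cons: "wconj G x (rev (g # ra)) = wconj G x (rev ra) @ [gconj G x g]"
  by (simp add: wconj_def)

lemma cls_zetaR_Cons_Cons:
  "cls (zetaR G x y (g # h # ra)) =
   delta_comp (gcmp G y (ginv G x)) (cls (zetaR G x y (h # ra)) \<otimes> cls (zeta1 G x y g))
     (W [] (br [gcmp G y (ginv G x)] (wconj G x (rev (h # ra)))) [gconj G x g])
     (wconj G x (rev (h # ra)) @ [gconj G x g])"
proof -
  let ?u = "gcmp G y (ginv G x)" and ?A = "wconj G x (rev (h # ra))"
  have "(I [?u] \<otimes> br [?u] ?A) \<otimes> I [gconj G x g] = W [?u] (br [?u] ?A) [gconj G x g]"
    by (simp only: W_def ctens_assoc)
  moreover have "dl ?u \<otimes> I (?A @ [gconj G x g]) = W [] (dl ?u) (?A @ [gconj G x g])"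
    by (simp only: ctens_I_right mor_or_empty_simps)
  ultimately show ?thesis
    unfolding delta_comp_def by (simp only: zetaR.simps Let_def cls_Comp cls_Tens W_W append.simps)
qed

context
  fixes x y
  assumes x: "x \<in> gAr G" and y: "y \<in> gAr G" and xy: "gtgt G y = gtgt G x"
begin

lemma zetaR_mor:
  "set ra \<subseteq> gAr G \<Longrightarrow> mor (cls (zetaR G x y ra))
     \<and> cdom (cls (zetaR G x y ra)) = gcmp G y (ginv G x) # wconj G x (rev ra)
     \<and> ccod (cls (zetaR G x y ra)) = wconj G y (rev ra)"
proof (induction ra rule: induct_list012)
  case 1
  then show ?case using x y xy by (simp add: wconj_def)
next
  case (2 g)
  then show ?case using zeta1_mor[OF x y _ xy, of g] by (simp add: wconj_def)
next
  case (3 g h ra)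
  have "set (wconj G x (rev (h # ra))) \<subseteq> gAr G" using wconj_closed[OF x, of "rev (h # ra)"] 3 by simp
  with 3 zeta1_mor[OF x y _ xy, of g] show ?case
    unfolding cls_zetaR_Cons_Cons delta_comp_def using x y xy
    by (simp add: wconj_rev_Cons del: rev.simps)
qed

end

lemma zetaR_mult:
  assumes x: "x \<in> gAr G" and y: "y \<in> gAr G" and z: "z \<in> gAr G"
    and xy: "gtgt G y = gtgt G x" and xz: "gtgt G z = gtgt G x"
  shows "set ra \<subseteq> gAr G \<Longrightarrow> cls (zetaR G y z ra) \<odot> W [gcmp G z (ginv G y)] (cls (zetaR G x y ra)) []
     = cls (zetaR G x z ra) \<odot> W [] (mu (gcmp G z (ginv G y)) (gcmp G y (ginv G x))) (wconj G x (rev ra))"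
proof (induction ra rule: induct_list012)
  case 1
  have "gcmp G z (ginv G y) \<in> gAr G" "gcmp G y (ginv G x) \<in> gAr G"
      "gtgt G (gcmp G z (ginv G y)) = gsrc G (gcmp G y (ginv G x))"
    using x y z xy xz by simp_all
  from counit_mult[OF this] show ?case using x y z xy xz by (simp add: wconj_def W_nil)
next
  case (2 g)
  then show ?case using zeta1_mult[OF x y z _ xy xz, of g] by (simp add: wconj_def)
next
  case (3 g h ra)
  have yz: "gtgt G z = gtgt G y" using xy xz by simp
  have s: "set (h # ra) \<subseteq> gAr G" "g \<in> gAr G" using 3 by auto
  have w: "gcmp G z (ginv G x) = gcmp G (gcmp G z (ginv G y)) (gcmp G y (ginv G x))"
    using x y z xy xz by simp
  have "set (wconj G x (rev (h # ra))) \<subseteq> gAr G" "set (wconj G y (rev (h # ra))) \<subseteq> gAr G"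
    using wconj_closed[OF x, of "rev (h # ra)"] wconj_closed[OF y, of "rev (h # ra)"] s by auto
  note types = this zetaR_mor[OF x y xy s(1)] zetaR_mor[OF y z yz s(1)] zetaR_mor[OF x z xz s(1)]
    zeta1_mor[OF x y s(2) xy] zeta1_mor[OF y z s(2) yz] zeta1_mor[OF x z s(2) xz]
  show ?case
    unfolding cls_zetaR_Cons_Cons wconj_rev_Cons[of x g "h # ra"] w
  proof (rule delta_comp_tens_mult)
    show "cls (zetaR G y z (h # ra)) \<odot> W [gcmp G z (ginv G y)] (cls (zetaR G x y (h # ra))) []
      = cls (zetaR G x z (h # ra)) \<odot> W [] (mu (gcmp G z (ginv G y)) (gcmp G y (ginv G x))) (wconj G x (rev (h # ra)))"
      using 3 by simp
    show "cls (zeta1 G y z g) \<odot> W [gcmp G z (ginv G y)] (cls (zeta1 G x y g)) []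
      = cls (zeta1 G x z g) \<odot> W [] (mu (gcmp G z (ginv G y)) (gcmp G y (ginv G x))) [gconj G x g]"
      by (rule zeta1_mult[OF x y z s(2) xy xz])
  qed (use x y z xy xz types in simp_all)
qed

lemma zeta_unit:
  assumes i: "i \<in> gOb G"
  shows "cls (zeta G (gid G i) (gid G i) [gid G i]) \<odot> W [] (et i) [gid G i] = I [gid G i]"
proof -
  let ?e = "gid G i"
  have e: "?e \<in> gAr G" using i by simp
  have z: "cls (zeta G ?e ?e [?e]) = mu ?e ?e \<odot> W [?e] (ract ?e ?e) [] \<odot> W [] (dl ?e) [?e]"
    unfolding zeta_def using cls_zeta1_loop[OF e e e HOL.refl] i by (simp add: gconj_def delta_comp_def)
  have d: "W [] (dl ?e) [?e] \<odot> W [] (et i) [?e] = W [?e] (et i) [?e] \<odot> W [] (et i) [?e]"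
    using W_arg_cong[OF delta_unit[OF i], of "[]" "[?e]"] by (simp add: W_simps)
  have r: "ract ?e ?e \<odot> W [] (et i) [?e] = I [?e]"
  proof -
    have "br [?e] [?e] \<odot> W [] (et i) [?e] = W [?e] (et i) []"
      using br_nat_left[of "et i" "[?e]"] i by (simp add: br_Nil_left ccomp_id_right)
    moreover have "W [?e] (an ?e) [] \<odot> W [?e] (et i) [] = W [?e] (et i) []"
      using W_arg_cong[OF antipode_unit[OF i], of "[?e]" "[]"] by (simp add: W_simps)
    ultimately show ?thesis
      unfolding ract_def using unitr[OF e] i by (simp add: ccomp_assoc)
  qed
  have "cls (zeta G ?e ?e [?e]) \<odot> W [] (et i) [?e] = mu ?e ?e \<odot> W [?e] (ract ?e ?e \<odot> W [] (et i) [?e]) [] \<odot> W [] (et i) [?e]"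
    unfolding z by (simp only: W_simps ccomp_assoc d append.simps)
  also have "\<dots> = mu ?e ?e \<odot> W [] (et i) [?e]"
    using i by (simp add: r W_I ccomp_id_left flip: ccomp_assoc)
  also have "\<dots> = I [?e]"
    using unitl[OF e] i by simp
  finally show ?thesis .
qed

lemma zeta_mult_heq:
  assumes x: "x \<in> gAr G" and y: "y \<in> gAr G" and z: "z \<in> gAr G"
    and xy: "gtgt G y = gtgt G x" and xz: "gtgt G z = gtgt G x" and A: "set A \<subseteq> gAr G"
  shows "heq G (Comp (zeta G y z A) (Tens (Id [gcmp G z (ginv G y)]) (zeta G x y A)))
               (Comp (zeta G x z A) (Tens (Mu (gcmp G z (ginv G y)) (gcmp G y (ginv G x))) (Id (wconj G x A))))"
proof (rule heq_if_cls_eq)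
  have yz: "gtgt G z = gtgt G y" using xy xz by simp
  have "set (rev A) \<subseteq> gAr G" using A by simp
  note mult = zetaR_mult[OF x y z xy xz this] and types = zetaR_mor[OF x y xy this] zetaR_mor[OF y z yz this]
  have eq: "cls (Comp (zeta G y z A) (Tens (Id [gcmp G z (ginv G y)]) (zeta G x y A)))
      = cls (zeta G y z A) \<odot> W [gcmp G z (ginv G y)] (cls (zeta G x y A)) []"
    by (simp add: cls_Comp cls_Tens I_ctens)
  have "mor (cls (zeta G y z A) \<odot> W [gcmp G z (ginv G y)] (cls (zeta G x y A)) [])"
    using types x y z xy xz unfolding zeta_def by simp
  then show "hwf G (Comp (zeta G y z A) (Tens (Id [gcmp G z (ginv G y)]) (zeta G x y A)))"
    by (simp only: eq[symmetric] mor_cls)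
  show "cls (Comp (zeta G y z A) (Tens (Id [gcmp G z (ginv G y)]) (zeta G x y A)))
      = cls (Comp (zeta G x z A) (Tens (Mu (gcmp G z (ginv G y)) (gcmp G y (ginv G x))) (Id (wconj G x A))))"
    using mult unfolding zeta_def by (simp add: cls_Comp cls_Tens I_ctens ctens_I_right)
qed

lemma zeta_unit_heq:
  assumes i: "i \<in> gOb G"
  shows "heq G (Comp (zeta G (gid G i) (gid G i) [gid G i]) (Tens (Et i) (Id [gid G i]))) (Id [gid G i])"
proof -
  have eq: "cls (Comp (zeta G (gid G i) (gid G i) [gid G i]) (Tens (Et i) (Id [gid G i]))) = cls (Id [gid G i])"
    using zeta_unit[OF i] by (simp add: cls_Comp cls_Tens ctens_I_right)
  have "hwf G (Id [gid G i])" using i by simp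
  then have "hwf G (Comp (zeta G (gid G i) (gid G i) [gid G i]) (Tens (Et i) (Id [gid G i])))"
    by (metis eq mor_cls)
  then show ?thesis using eq by (rule heq_if_cls_eq)
qed

end

theorem proposition8p3:
  fixes G :: "('o, 'a) grpd" and x y z :: 'a and A :: "'a list"
  assumes "groupoid G"
    and "x \<in> gAr G" and "y \<in> gAr G" and "z \<in> gAr G"
    and "gtgt G y = gtgt G x" and "gtgt G z = gtgt G x"
    and "set A \<subseteq> gAr G"
  shows "heq G (Comp (zeta G y z A) (Tens (Id [gcmp G z (ginv G y)]) (zeta G x y A)))
               (Comp (zeta G x z A) (Tens (Mu (gcmp G z (ginv G y)) (gcmp G y (ginv G x)))
                                          (Id (wconj G x A))))
       \<and> (\<forall>i\<in>gOb G.
           heq G (Comp (zeta G (gid G i) (gid G i) [gid G i])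
                       (Tens (Id [gid G i]) (zeta G (gid G i) (gid G i) [gid G i])))
                 (Comp (zeta G (gid G i) (gid G i) [gid G i])
                       (Tens (Mu (gid G i) (gid G i)) (Id [gid G i])))
         \<and> heq G (Comp (zeta G (gid G i) (gid G i) [gid G i]) (Tens (Et i) (Id [gid G i])))
                 (Id [gid G i]))"
proof -
  interpret Hr G by (rule Hr.intro) fact
  have "heq G (Comp (zeta G e e [e]) (Tens (Id [e]) (zeta G e e [e])))
              (Comp (zeta G e e [e]) (Tens (Mu e e) (Id [e])))" if "i \<in> gOb G" and e: "e = gid G i" for i e
    using zeta_mult_heq[of e e e "[e]"] that by (simp add: wconj_def gconj_def)
  then show ?thesis using zeta_mult_heq zeta_unit_heq assms by blast
qed

end
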